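(* Let $0\le s\le d$, let $\Gamma$ be a graph with $v$ vertices that is generically locally rigid in $\mathbb E^d$ but not generically globally rigid in $\mathbb E^d$, and let $E$ be an irreducible component of the set $E^+$ of equivalent pairs of frameworks of $\Gamma$ in $\mathbb E^d$ with $\dim\pi_1(E)=vd$ and containing a non-congruent pair. Let $E_{\mathbb C}$ be the complexification of $E$. Then the complex Pogorelov map $P_{\mathbb C}$ restricts to an automorphism (algebraic bijection) of $E_{\mathbb C}$. Consequently, if $e\in E_{\mathbb C}$ is generic, then $P_{\mathbb C}(e)$ is generic in $E_{\mathbb C}$, and both components $\pi_1(P_{\mathbb C}(e))$ and $\pi_2(P_{\mathbb C}(e))$ are generic frameworks in $C_{\mathbb C^d}(\Gamma)$.
   Context: In $\mathbb C^d$ the squared length is $|w|^2=\sum_i w_i^2$ (no conjugation). $C_{\mathbb F^d}(\Gamma)$ denotes the space of frameworks (maps $\mathcal V\to\mathbb F^d$) of $\Gamma$. Frameworks are equivalent if squared edge lengths agree on all edges, congruent if on all vertex pairs. $E^+\subseteq C_{\mathbb E^d}(\Gamma)^2$ is the real algebraic set of equivalent pairs; $\pi_1,\pi_2$ are the projections to the factors. Generically locally rigid: generic frameworks have rigidity matrix of rank $vd-\binom{d+1}{2}$ (for $v\ge d+1$). The complexification of a real variety is the smallest complex variety containing it. The complex Pogorelov map is $P_{\mathbb C}=H^{-1}\circ S\circ H$ on $C_{\mathbb C^d}(\Gamma)^2$, where $H(\rho,\sigma)=((\rho+\sigma)/2,(\rho-\sigma)/2)$, $H^{-1}(a,f)=(a+f,a-f)$,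 and $S(a,f)=(\tilde a,\tilde f)$ with $\tilde a$ obtained from $a$ by multiplying the first $s$ coordinates of every vertex by $i$ and $\tilde f$ obtained from $f$ by multiplying the first $s$ coordinates of every vertex by $-i$. A point is generic in a variety defined over a number field $\mathbf k$ if it satisfies no polynomial equation over $\mathbf k$ not vanishing on the whole variety; a framework in $\mathbb C^d$ is generic if its coordinates satisfy no nonzero rational polynomial equation. *)

theory Defs
  imports Complex_Main "HOL-Computational_Algebra.Polynomial"
begin

inductive_set polys :: "'a::field_char_0 set \<Rightarrow> (('x \<Rightarrow> 'a) \<Rightarrow> 'a) set" for K where
  pconst: "c \<in> K \<Longrightarrow> (\<lambda>_. c) \<in> polys K"
| pvar: "(\<lambda>z. z x) \<in> polys K"
| padd: "f \<in> polys K \<Longrightarrow> g \<in> polys K \<Longrightarrow> (\<lambda>z. f z + g z) \<in> polys K"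
| pmul: "f \<in> polys K \<Longrightarrow> g \<in> polys K \<Longrightarrow> (\<lambda>z. f z * g z) \<in> polys K"

definition zero_set :: "(('x \<Rightarrow> 'a) \<Rightarrow> 'a::zero) set \<Rightarrow> ('x \<Rightarrow> 'a) set" where
  "zero_set P = {z. \<forall>f\<in>P. f z = 0}"

definition alg_set :: "'a::field_char_0 set \<Rightarrow> ('x \<Rightarrow> 'a) set \<Rightarrow> bool" where
  "alg_set K S \<longleftrightarrow> (\<exists>P. P \<subseteq> polys K \<and> S = zero_set P)"

definition irred_alg :: "'a::field_char_0 set \<Rightarrow> ('x \<Rightarrow> 'a) set \<Rightarrow> bool" where
  "irred_alg K S \<longleftrightarrow> alg_set K S \<and> S \<noteq> {} \<and>
     (\<forall>A B. alg_set K A \<longrightarrow> alg_set K B \<longrightarrow> S = A \<union> B \<longrightarrow> S = A \<or> S = B)"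

definition irred_component :: "'a::field_char_0 set \<Rightarrow> ('x \<Rightarrow> 'a) set \<Rightarrow> ('x \<Rightarrow> 'a) set \<Rightarrow> bool" where
  "irred_component K S T \<longleftrightarrow> irred_alg K S \<and> S \<subseteq> T \<and>
     (\<forall>S'. irred_alg K S' \<longrightarrow> S \<subseteq> S' \<longrightarrow> S' \<subseteq> T \<longrightarrow> S' = S)"

definition zar_closure :: "'a::field_char_0 set \<Rightarrow> ('x \<Rightarrow> 'a) set \<Rightarrow> ('x \<Rightarrow> 'a) set" where
  "zar_closure K S = \<Inter>{Z. alg_set K Z \<and> S \<subseteq> Z}"

definition alg_dim :: "'a::field_char_0 set \<Rightarrow> ('x \<Rightarrow> 'a) set \<Rightarrow> nat" where
  "alg_dim K S = Sup {n. \<exists>Z::nat \<Rightarrow> ('x \<Rightarrow> 'a) set.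
      (\<forall>i\<le>n. irred_alg K (Z i)) \<and> (\<forall>i<n. Z i \<subset> Z (Suc i)) \<and> Z n \<subseteq> S}"

definition set_dim :: "'a::field_char_0 set \<Rightarrow> ('x \<Rightarrow> 'a) set \<Rightarrow> nat" where
  "set_dim K S = alg_dim K (zar_closure K S)"

definition complexification :: "('x \<Rightarrow> real) set \<Rightarrow> ('x \<Rightarrow> complex) set" where
  "complexification S = zar_closure (UNIV::complex set) ((\<lambda>z x. complex_of_real (z x)) ` S)"

text \<open>A framework in F^d of a graph on vertex type 'v is a map 'v => nat => F whose
  coordinates i >= d vanish.\<close>
definition frameworks :: "nat \<Rightarrow> ('v \<Rightarrow> nat \<Rightarrow> 'a::zero) set" where
  "frameworks d = {p. \<forall>x i. d \<le> i \<longrightarrow> p x i = 0}"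

definition fc :: "('v \<Rightarrow> nat \<Rightarrow> 'a) \<Rightarrow> ('v \<times> nat \<Rightarrow> 'a)" where
  "fc p = (\<lambda>(x, i). p x i)"

definition pc :: "('v \<Rightarrow> nat \<Rightarrow> 'a) \<times> ('v \<Rightarrow> nat \<Rightarrow> 'a) \<Rightarrow> (bool \<times> 'v \<times> nat \<Rightarrow> 'a)" where
  "pc e = (\<lambda>(b, x, i). if b then fst e x i else snd e x i)"

text \<open>Squared length without conjugation.\<close>
definition sqd :: "nat \<Rightarrow> ('v \<Rightarrow> nat \<Rightarrow> 'a::comm_ring_1) \<Rightarrow> 'v \<Rightarrow> 'v \<Rightarrow> 'a" where
  "sqd d p a b = (\<Sum>i<d. (p a i - p b i)^2)"

definition equivalent :: "('v \<Rightarrow> 'v \<Rightarrow> bool) \<Rightarrow> nat \<Rightarrow> ('v \<Rightarrow> nat \<Rightarrow> 'a::comm_ring_1) \<Rightarrow> ('v \<Rightarrow> nat \<Rightarrow> 'a) \<Rightarrow> bool" where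
  "equivalent G d p q \<longleftrightarrow> (\<forall>a b. G a b \<longrightarrow> sqd d p a b = sqd d q a b)"

definition congruent :: "nat \<Rightarrow> ('v \<Rightarrow> nat \<Rightarrow> 'a::comm_ring_1) \<Rightarrow> ('v \<Rightarrow> nat \<Rightarrow> 'a) \<Rightarrow> bool" where
  "congruent d p q \<longleftrightarrow> (\<forall>a b. sqd d p a b = sqd d q a b)"

definition Eplus :: "('v \<Rightarrow> 'v \<Rightarrow> bool) \<Rightarrow> nat \<Rightarrow> (('v \<Rightarrow> nat \<Rightarrow> real) \<times> ('v \<Rightarrow> nat \<Rightarrow> real)) set" where
  "Eplus G d = {(p, q). p \<in> frameworks d \<and> q \<in> frameworks d \<and> equivalent G d p q}"

text \<open>Generic framework: coordinates satisfy no nonzero rational polynomial equation,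
  i.e. every rational polynomial vanishing at p vanishes on all of C_{F^d}.\<close>
definition generic_fw :: "nat \<Rightarrow> ('v \<Rightarrow> nat \<Rightarrow> 'a::field_char_0) \<Rightarrow> bool" where
  "generic_fw d p \<longleftrightarrow> p \<in> frameworks d \<and>
     (\<forall>f\<in>polys (\<rat>::'a set). f (fc p) = 0 \<longrightarrow> (\<forall>q\<in>frameworks d. f (fc q) = 0))"

text \<open>Rows of the rigidity matrix, indexed by oriented edges (a,b); the row of (b,a) is
  the negative of the row of (a,b), so this does not affect the rank.\<close>
definition rig_row :: "nat \<Rightarrow> ('v \<Rightarrow> nat \<Rightarrow> real) \<Rightarrow> 'v \<times> 'v \<Rightarrow> 'v \<Rightarrow> nat \<Rightarrow> real" where
  "rig_row d p e x i = (if i < d then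
      (if x = fst e then p (fst e) i - p (snd e) i
       else if x = snd e then p (snd e) i - p (fst e) i else 0) else 0)"

definition rows_indep :: "nat \<Rightarrow> ('v \<Rightarrow> nat \<Rightarrow> real) \<Rightarrow> ('v \<times> 'v) set \<Rightarrow> bool" where
  "rows_indep d p F \<longleftrightarrow> (\<forall>c. (\<forall>x i. (\<Sum>e\<in>F. c e * rig_row d p e x i) = 0) \<longrightarrow> (\<forall>e\<in>F. c e = 0))"

definition rig_rank :: "('v::finite \<Rightarrow> 'v \<Rightarrow> bool) \<Rightarrow> nat \<Rightarrow> ('v \<Rightarrow> nat \<Rightarrow> real) \<Rightarrow> nat" where
  "rig_rank G d p = Max (card ` {F. F \<subseteq> {(a, b). G a b} \<and> rows_indep d p F})"

definition max_rank :: "nat \<Rightarrow> nat \<Rightarrow> nat" where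
  "max_rank v d = (if d + 1 \<le> v then v * d - ((d + 1) choose 2) else v choose 2)"

definition gen_loc_rigid :: "('v::finite \<Rightarrow> 'v \<Rightarrow> bool) \<Rightarrow> nat \<Rightarrow> bool" where
  "gen_loc_rigid G d \<longleftrightarrow> (\<forall>p::'v \<Rightarrow> nat \<Rightarrow> real. generic_fw d p \<longrightarrow> rig_rank G d p = max_rank (card (UNIV :: 'v set)) d)"

definition gen_glob_rigid :: "('v::finite \<Rightarrow> 'v \<Rightarrow> bool) \<Rightarrow> nat \<Rightarrow> bool" where
  "gen_glob_rigid G d \<longleftrightarrow> (\<forall>p::'v \<Rightarrow> nat \<Rightarrow> real. generic_fw d p \<longrightarrow>
      (\<forall>q\<in>frameworks d. equivalent G d p q \<longrightarrow> congruent d p q))"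

definition pogorelov :: "nat \<Rightarrow> ('v \<Rightarrow> nat \<Rightarrow> complex) \<times> ('v \<Rightarrow> nat \<Rightarrow> complex)
    \<Rightarrow> ('v \<Rightarrow> nat \<Rightarrow> complex) \<times> ('v \<Rightarrow> nat \<Rightarrow> complex)" where
  "pogorelov s e =
    (let a = (\<lambda>x i. (fst e x i + snd e x i) / 2);
         f = (\<lambda>x i. (fst e x i - snd e x i) / 2);
         a' = (\<lambda>x i. if i < s then \<i> * a x i else a x i);
         f' = (\<lambda>x i. if i < s then - \<i> * f x i else f x i)
     in ((\<lambda>x i. a' x i + f' x i), (\<lambda>x i. a' x i - f' x i)))"

definition generic_in :: "(('v \<Rightarrow> nat \<Rightarrow> complex) \<times> ('v \<Rightarrow> nat \<Rightarrow> complex)) set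
    \<Rightarrow> ('v \<Rightarrow> nat \<Rightarrow> complex) \<times> ('v \<Rightarrow> nat \<Rightarrow> complex) \<Rightarrow> bool" where
  "generic_in V e \<longleftrightarrow> e \<in> V \<and>
     (\<forall>f\<in>polys {x::complex. algebraic x}. f (pc e) = 0 \<longrightarrow> (\<forall>z\<in>V. f (pc z) = 0))"

end

theory Submission
  imports Defs
begin

text \<open>In the coordinates \<open>a = (p + q) / 2\<close>, \<open>f = (p - q) / 2\<close> of a pair of frameworks, the
  pair is equivalent iff \<open>\<langle>a x - a y, f x - f y\<rangle> = 0\<close> on every edge, so scaling the first
  \<open>s\<close> coordinates of \<open>a\<close> by \<open>c\<close> and of \<open>f\<close> by \<open>1 / c\<close> preserves \<open>E\<^sup>+\<close>. For \<open>c > 0\<close>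
  these maps form an irreducible algebraic family through the identity, so they preserve every
  irreducible component \<open>E\<close>; as a polynomial in \<open>c\<close> vanishing for all \<open>c > 0\<close> vanishes
  identically, the complexification of \<open>E\<close> is preserved by every complex \<open>c \<noteq> 0\<close>. The
  Pogorelov map is the case \<open>c = \<i>\<close>, with inverse \<open>c = - \<i>\<close>, and it is defined over the
  algebraic numbers, so it maps generic points to generic points.

  A generic point of the complexification projects to a generic framework because
  \<open>dim \<pi>\<^sub>1(E) = v d\<close> forces the Zariski closure of \<open>\<pi>\<^sub>1(E)\<close> to be the whole configuration space:
  along a strict chain of irreducible sets the number of algebraically independent coordinates
  strictly increases. The Pogorelov map with \<open>s = d\<close> turns the second component into
  \<open>\<i>\<close> times the first, which transfers genericity to \<open>\<pi>\<^sub>2\<close>.\<close>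

section \<open>Polynomial functions and algebraic sets\<close>

lemma polys_subst:
  assumes "f \<in> polys K" and "\<And>y. (\<lambda>z. \<sigma> z y) \<in> polys K"
  shows "(\<lambda>z. f (\<sigma> z)) \<in> polys K"
  using assms(1)
proof induction
  case (pconst c) then show ?case by (rule polys.pconst)
next
  case (pvar x) then show ?case using assms(2) by simp
next
  case (padd f g) then show ?case using polys.padd[OF padd.IH] by simp
next
  case (pmul f g) then show ?case using polys.pmul[OF pmul.IH] by simp
qed

lemma polys_mono:
  assumes "f \<in> polys K" "K \<subseteq> L" shows "f \<in> polys L"
  using assms(1)
proof induction
  case (pconst c) then show ?case using assms(2) by (auto intro: polys.pconst)
qed (auto intro: polys.intros)

lemma polys_const_UNIV: "(\<lambda>_. c) \<in> polys UNIV"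
  by (rule polys.pconst) simp

lemma polys_cmult: "f \<in> polys UNIV \<Longrightarrow> (\<lambda>z. c * f z) \<in> polys UNIV"
  using polys.pmul[OF polys_const_UNIV, of f c] by simp

lemma polys_uminus: "f \<in> polys UNIV \<Longrightarrow> (\<lambda>z. - f z) \<in> polys UNIV"
  using polys_cmult[of f "-1"] by simp

lemma polys_diff:
  "f \<in> polys UNIV \<Longrightarrow> g \<in> polys UNIV \<Longrightarrow> (\<lambda>z. f z - g z) \<in> polys UNIV"
  using polys.padd[OF _ polys_uminus, of f g] by simp

lemma polys_power: "f \<in> polys UNIV \<Longrightarrow> (\<lambda>z. f z ^ n) \<in> polys UNIV"
proof (induction n)
  case 0 then show ?case using polys_const_UNIV[of 1] by simp
next
  case (Suc n) then show ?case using polys.pmul[of f UNIV] by simp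
qed

lemma polys_sum:
  assumes "finite A" "\<And>a. a \<in> A \<Longrightarrow> F a \<in> polys UNIV"
  shows "(\<lambda>z. \<Sum>a\<in>A. F a z) \<in> polys UNIV"
  using assms
proof (induction A rule: finite_induct)
  case empty then show ?case using polys_const_UNIV[of 0] by simp
next
  case (insert a A)
  then have "(\<lambda>z. F a z + (\<Sum>a\<in>A. F a z)) \<in> polys UNIV"
    by (intro polys.padd) auto
  then show ?case using insert by simp
qed

lemma alg_set_zero_set: "P \<subseteq> polys K \<Longrightarrow> alg_set K (zero_set P)"
  unfolding alg_set_def by blast

lemma alg_setE:
  assumes "alg_set K S" obtains P where "P \<subseteq> polys K" "S = zero_set P"
  using assms unfolding alg_set_def by blast

lemma alg_set_zeros: "f \<in> polys K \<Longrightarrow> alg_set K {z. f z = 0}"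
  using alg_set_zero_set[of "{f}" K] by (simp add: zero_set_def)

lemma alg_set_Inter:
  assumes "\<And>Z. Z \<in> \<Z> \<Longrightarrow> alg_set K Z" shows "alg_set K (\<Inter>\<Z>)"
proof -
  have "\<forall>Z\<in>\<Z>. \<exists>P. P \<subseteq> polys K \<and> Z = zero_set P"
    using assms unfolding alg_set_def by blast
  then obtain P where P: "\<And>Z. Z \<in> \<Z> \<Longrightarrow> P Z \<subseteq> polys K \<and> Z = zero_set (P Z)"
    by metis
  have "\<Inter>\<Z> = zero_set (\<Union>Z\<in>\<Z>. P Z)"
    unfolding zero_set_def
  proof (intro equalityI subsetI CollectI ballI)
    fix z f assume "z \<in> \<Inter>\<Z>" "f \<in> (\<Union>Z\<in>\<Z>. P Z)"
    then show "f z = 0" using P by (fastforce simp: zero_set_def)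
  next
    fix z assume "z \<in> {z. \<forall>f\<in>\<Union>Z\<in>\<Z>. P Z. f z = 0}"
    then show "z \<in> \<Inter>\<Z>" using P by (fastforce simp: zero_set_def)
  qed
  then show ?thesis using P alg_set_zero_set[of "\<Union>Z\<in>\<Z>. P Z" K] by auto
qed

lemma alg_set_Int: "alg_set K A \<Longrightarrow> alg_set K B \<Longrightarrow> alg_set K (A \<inter> B)"
  using alg_set_Inter[of "{A, B}"] by auto

lemma alg_set_preimage:
  assumes "alg_set K Z" "\<And>y. (\<lambda>z. \<sigma> z y) \<in> polys K"
  shows "alg_set K {z. \<sigma> z \<in> Z}"
proof -
  obtain P where P: "P \<subseteq> polys K" "Z = zero_set P" using assms(1) by (rule alg_setE)
  have "{z. \<sigma> z \<in> Z} = zero_set ((\<lambda>f z. f (\<sigma> z)) ` P)"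
    using P by (auto simp: zero_set_def)
  moreover have "(\<lambda>f z. f (\<sigma> z)) ` P \<subseteq> polys K"
    using P assms(2) polys_subst by blast
  ultimately show ?thesis by (simp add: alg_set_zero_set)
qed

lemma alg_set_separating_poly:
  assumes "alg_set K Z" "x \<notin> Z" obtains f where "f \<in> polys K" "\<forall>z\<in>Z. f z = 0" "f x \<noteq> 0"
  using assms by (auto simp: alg_set_def zero_set_def)

lemma alg_set_zar_closure: "alg_set K (zar_closure K S)"
  unfolding zar_closure_def by (rule alg_set_Inter) auto

lemma subset_zar_closure: "S \<subseteq> zar_closure K S"
  unfolding zar_closure_def by auto

lemma zar_closure_minimal: "alg_set K Z \<Longrightarrow> S \<subseteq> Z \<Longrightarrow> zar_closure K S \<subseteq> Z"
  unfolding zar_closure_def by auto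

lemma zar_closure_vanishes:
  assumes "f \<in> polys K" "\<forall>w\<in>S. f w = 0" "w \<in> zar_closure K S"
  shows "f w = 0"
  using zar_closure_minimal[OF alg_set_zeros[OF assms(1)], of S] assms(2,3) by blast

lemma irred_alg_product_vanishes:
  assumes "irred_alg K Y" "a \<in> polys K" "b \<in> polys K" "\<forall>z\<in>Y. a z * b z = 0"
  shows "(\<forall>z\<in>Y. a z = 0) \<or> (\<forall>z\<in>Y. b z = 0)"
proof -
  have "alg_set K Y" using assms(1) by (simp add: irred_alg_def)
  then have "alg_set K (Y \<inter> {z. a z = 0})" "alg_set K (Y \<inter> {z. b z = 0})"
    using assms(2,3) alg_set_zeros alg_set_Int by blast+
  moreover have "Y = (Y \<inter> {z. a z = 0}) \<union> (Y \<inter> {z. b z = 0})" using assms(4) by auto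
  ultimately have "Y = Y \<inter> {z. a z = 0} \<or> Y = Y \<inter> {z. b z = 0}"
    using assms(1) unfolding irred_alg_def by blast
  then show ?thesis by blast
qed

lemma poly_eq_0_if_infinite_roots:
  fixes q :: "'a::idom poly"
  assumes "infinite S" "\<forall>x\<in>S. poly q x = 0" shows "q = 0"
  using assms poly_roots_finite[of q] finite_subset[of S "{x. poly q x = 0}"] by blast

section \<open>A one-parameter group of hyperbolic rotations\<close>

text \<open>In the coordinates \<open>a = (p + q) / 2\<close>, \<open>f = (p - q) / 2\<close> this is \<open>a \<mapsto> c a\<close>,
  \<open>f \<mapsto> f / c\<close> on the first \<open>s\<close> coordinates.\<close>
definition boost :: "nat \<Rightarrow> 'a::field \<Rightarrow> (bool \<times> 'v \<times> nat \<Rightarrow> 'a) \<Rightarrow> (bool \<times> 'v \<times> nat \<Rightarrow> 'a)" where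
  "boost s c z = (\<lambda>(b, x, i). if i < s then
      (if b then ((c + inverse c) / 2) * z (True, x, i) + ((c - inverse c) / 2) * z (False, x, i)
       else ((c - inverse c) / 2) * z (True, x, i) + ((c + inverse c) / 2) * z (False, x, i))
     else z (b, x, i))"

lemma boost_1: "boost s (1::'a::field_char_0) z = z"
  by (rule ext) (auto simp: boost_def)

lemma boost_boost:
  fixes c c' :: "'a::field_char_0"
  assumes "c \<noteq> 0" "c' \<noteq> 0"
  shows "boost s c (boost s c' z) = boost s (c * c') z"
proof (rule ext, clarify)
  fix b x i
  show "boost s c (boost s c' z) (b, x, i) = boost s (c * c') z (b, x, i)"
    using assms by (cases b) (simp_all add: boost_def field_simps)
qed

lemma polys_boost:
  assumes "(c + inverse c) / 2 \<in> K" "(c - inverse c) / 2 \<in> K"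
  shows "(\<lambda>z. boost s c z y) \<in> polys K"
proof -
  obtain b x i where y: "y = (b, x, i)" by (cases y) auto
  have "(\<lambda>z. \<alpha> * z (True, x, i) + \<beta> * z (False, x, i)) \<in> polys K" if "\<alpha> \<in> K" "\<beta> \<in> K" for \<alpha> \<beta>
    using that by (intro polys.intros)
  then have "(\<lambda>z. ((c + inverse c) / 2) * z (True, x, i) + ((c - inverse c) / 2) * z (False, x, i)) \<in> polys K"
    "(\<lambda>z. ((c - inverse c) / 2) * z (True, x, i) + ((c + inverse c) / 2) * z (False, x, i)) \<in> polys K"
    using assms by blast+
  then show ?thesis by (cases "i < s"; cases b) (simp_all add: boost_def y polys.pvar)
qed

lemma polys_boost_UNIV: "(\<lambda>z. boost s c z y) \<in> polys UNIV"
  by (rule polys_boost) auto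

lemma boost_coord_laurent:
  "\<exists>N q. \<forall>c. c \<noteq> 0 \<longrightarrow> c ^ N * boost s c z y = poly q (c::'a::field_char_0)"
proof -
  obtain b x i where y: "y = (b, x, i)" by (cases y) auto
  define u where "u = z (True, x, i)"
  define v where "v = z (False, x, i)"
  consider "\<not> i < s" | "i < s" "b" | "i < s" "\<not> b" by blast
  then show ?thesis
  proof cases
    case 1
    show ?thesis by (rule exI[of _ 0], rule exI[of _ "[:z y:]"]) (simp add: boost_def y 1)
  next
    case 2
    show ?thesis
      by (rule exI[of _ 1], rule exI[of _ "[:(u - v) / 2, 0, (u + v) / 2:]"])
        (use 2 in \<open>auto simp: boost_def y u_def v_def field_simps\<close>)
  next
    case 3
    show ?thesis
      by (rule exI[of _ 1], rule exI[of _ "[:(v - u) / 2, 0, (u + v) / 2:]"])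
        (use 3 in \<open>auto simp: boost_def y u_def v_def field_simps\<close>)
  qed
qed

lemma boost_laurent:
  fixes f :: "(bool \<times> 'v \<times> nat \<Rightarrow> 'a::field_char_0) \<Rightarrow> 'a"
  assumes "f \<in> polys K"
  shows "\<exists>N q. \<forall>c. c \<noteq> 0 \<longrightarrow> c ^ N * f (boost s c z) = poly q c"
  using assms
proof induction
  case (pconst c)
  show ?case by (rule exI[of _ 0], rule exI[of _ "[:c:]"]) simp
next
  case (pvar y)
  show ?case by (rule boost_coord_laurent)
next
  case (padd f g)
  obtain N1 q1 where 1: "\<forall>c. c \<noteq> 0 \<longrightarrow> c ^ N1 * f (boost s c z) = poly q1 c"
    using padd.IH(1) by blast
  obtain N2 q2 where 2: "\<forall>c. c \<noteq> 0 \<longrightarrow> c ^ N2 * g (boost s c z) = poly q2 c"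
    using padd.IH(2) by blast
  have "c ^ (N1 + N2) * (f (boost s c z) + g (boost s c z))
      = poly (monom 1 N2 * q1 + monom 1 N1 * q2) c" if "c \<noteq> 0" for c
  proof -
    have "c ^ (N1 + N2) * (f (boost s c z) + g (boost s c z))
        = c ^ N2 * (c ^ N1 * f (boost s c z)) + c ^ N1 * (c ^ N2 * g (boost s c z))"
      by (simp add: power_add algebra_simps)
    then show ?thesis using 1 2 that by (simp add: poly_monom)
  qed
  then show ?case by blast
next
  case (pmul f g)
  obtain N1 q1 where 1: "\<forall>c. c \<noteq> 0 \<longrightarrow> c ^ N1 * f (boost s c z) = poly q1 c"
    using pmul.IH(1) by blast
  obtain N2 q2 where 2: "\<forall>c. c \<noteq> 0 \<longrightarrow> c ^ N2 * g (boost s c z) = poly q2 c"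
    using pmul.IH(2) by blast
  have "c ^ (N1 + N2) * (f (boost s c z) * g (boost s c z)) = poly (q1 * q2) c" if "c \<noteq> 0" for c
  proof -
    have "c ^ (N1 + N2) * (f (boost s c z) * g (boost s c z))
        = (c ^ N1 * f (boost s c z)) * (c ^ N2 * g (boost s c z))"
      by (simp add: power_add algebra_simps)
    then show ?thesis using 1 2 that by simp
  qed
  then show ?case by blast
qed

lemma boost_mem_if_infinitely_many:
  fixes A :: "(bool \<times> 'v \<times> nat \<Rightarrow> 'a::field_char_0) set"
  assumes A: "alg_set UNIV A" and L: "infinite L" "0 \<notin> L" "\<forall>c'\<in>L. boost s c' z \<in> A"
    and c: "c \<noteq> 0"
  shows "boost s c z \<in> A"
proof -
  obtain P where P: "P \<subseteq> polys UNIV" "A = zero_set P" using A by (rule alg_setE)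
  have "f (boost s c z) = 0" if f: "f \<in> P" for f
  proof -
    obtain N q where q: "\<forall>c. c \<noteq> 0 \<longrightarrow> c ^ N * f (boost s c z) = poly q c"
      using boost_laurent[of f UNIV s z] f P(1) by blast
    have "poly q c' = 0" if c': "c' \<in> L" for c'
    proof -
      have "f (boost s c' z) = 0" using L(3) f P(2) c' by (auto simp: zero_set_def)
      moreover have "c' \<noteq> 0" using c' L(2) by blast
      ultimately show ?thesis using q by force
    qed
    then have "q = 0" using poly_eq_0_if_infinite_roots[OF L(1)] by blast
    then show ?thesis using q c by simp
  qed
  then show ?thesis using P(2) by (simp add: zero_set_def)
qed

section \<open>Equivalent pairs in coordinates\<close>

lemma pc_inj: "pc e = pc e' \<Longrightarrow> e = e'"
  by (simp add: pc_def prod_eq_iff fun_eq_iff split: prod.splits) (metis (full_types))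

lemma inj_pc: "inj pc"
  using pc_inj by (rule injI)

definition unpc :: "(bool \<times> 'v \<times> nat \<Rightarrow> 'a) \<Rightarrow> ('v \<Rightarrow> nat \<Rightarrow> 'a) \<times> ('v \<Rightarrow> nat \<Rightarrow> 'a)" where
  "unpc z = ((\<lambda>x i. z (True, x, i)), (\<lambda>x i. z (False, x, i)))"

lemma pc_unpc [simp]: "pc (unpc z) = z"
  by (rule ext) (auto simp: pc_def unpc_def split: bool.splits)

lemma unpc_pc [simp]: "unpc (pc e) = e"
  by (rule pc_inj) simp

definition sqd_diff :: "nat \<Rightarrow> (bool \<times> 'v \<times> nat \<Rightarrow> 'a::comm_ring_1) \<Rightarrow> 'v \<Rightarrow> 'v \<Rightarrow> 'a" where
  "sqd_diff d z a b =
     (\<Sum>i<d. (z (True, a, i) - z (True, b, i))^2) - (\<Sum>i<d. (z (False, a, i) - z (False, b, i))^2)"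

definition Eplus_pc :: "('v \<Rightarrow> 'v \<Rightarrow> bool) \<Rightarrow> nat \<Rightarrow> (bool \<times> 'v \<times> nat \<Rightarrow> 'a::comm_ring_1) set" where
  "Eplus_pc G d = {z. (\<forall>b x i. d \<le> i \<longrightarrow> z (b, x, i) = 0) \<and> (\<forall>a b. G a b \<longrightarrow> sqd_diff d z a b = 0)}"

lemma pc_Eplus: "pc ` Eplus G d = Eplus_pc G d"
proof (intro equalityI subsetI)
  fix z assume "z \<in> pc ` Eplus G d"
  then show "z \<in> Eplus_pc G d"
    by (auto simp: Eplus_pc_def Eplus_def frameworks_def equivalent_def sqd_def sqd_diff_def pc_def)
next
  fix z :: "bool \<times> 'a \<times> nat \<Rightarrow> real" assume "z \<in> Eplus_pc G d"
  then have "unpc z \<in> Eplus G d"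
    by (auto simp: Eplus_pc_def Eplus_def frameworks_def equivalent_def sqd_def sqd_diff_def unpc_def)
  then show "z \<in> pc ` Eplus G d" by (metis image_eqI pc_unpc)
qed

lemma alg_set_Eplus_pc:
  "alg_set (UNIV::'a::field_char_0 set) (Eplus_pc G d :: (bool \<times> 'v \<times> nat \<Rightarrow> 'a) set)"
proof -
  define P :: "((bool \<times> 'v \<times> nat \<Rightarrow> 'a) \<Rightarrow> 'a) set" where
    "P = {\<lambda>z. z (b, x, i) | b x i. d \<le> i} \<union> {\<lambda>z. sqd_diff d z a b | a b. G a b}"
  have "Eplus_pc G d = zero_set P"
  proof (intro equalityI subsetI)
    fix z assume "z \<in> zero_set P"
    then have vanish: "f \<in> P \<Longrightarrow> f z = 0" for f by (simp add: zero_set_def)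
    show "z \<in> Eplus_pc G d" unfolding Eplus_pc_def
    proof (intro CollectI conjI allI impI)
      fix b x i assume "d \<le> i"
      then show "z (b, x, i) = 0" using vanish[of "\<lambda>z. z (b, x, i)"] by (auto simp: P_def)
    next
      fix a b assume "G a b"
      then have "(\<lambda>z. sqd_diff d z a b) \<in> P" unfolding P_def by blast
      then show "sqd_diff d z a b = 0" by (rule vanish)
    qed
  qed (auto simp: Eplus_pc_def P_def zero_set_def)
  moreover have "(\<lambda>z. sqd_diff d z a b) \<in> polys UNIV" for a b
    unfolding sqd_diff_def by (intro polys_diff polys_sum polys_power) (auto intro: polys.intros)
  then have "P \<subseteq> polys UNIV" unfolding P_def by (auto intro: polys.pvar)
  ultimately show ?thesis by (simp add: alg_set_zero_set)
qed

lemma boost_Eplus_pc: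
  fixes c :: "'a::field_char_0"
  assumes "z \<in> Eplus_pc G d" "s \<le> d" "c \<noteq> 0"
  shows "boost s c z \<in> Eplus_pc G d"
proof -
  define \<alpha> where "\<alpha> = (c + inverse c) / 2"
  define \<beta> where "\<beta> = (c - inverse c) / 2"
  have ab: "\<alpha>^2 - \<beta>^2 = 1" using assms(3) by (simp add: \<alpha>_def \<beta>_def power2_eq_square field_simps)
  have "sqd_diff d (boost s c z) a b = sqd_diff d z a b" for a b
  proof -
    have "(boost s c z (True, a, i) - boost s c z (True, b, i))^2
          - (boost s c z (False, a, i) - boost s c z (False, b, i))^2
        = (z (True, a, i) - z (True, b, i))^2 - (z (False, a, i) - z (False, b, i))^2" for i
    proof (cases "i < s")
      case True
      define P where "P = z (True, a, i) - z (True, b, i)"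
      define Q where "Q = z (False, a, i) - z (False, b, i)"
      have "boost s c z (True, a, i) - boost s c z (True, b, i) = \<alpha> * P + \<beta> * Q"
        "boost s c z (False, a, i) - boost s c z (False, b, i) = \<beta> * P + \<alpha> * Q"
        using True by (simp_all add: boost_def \<alpha>_def \<beta>_def P_def Q_def algebra_simps)
      moreover have "(\<alpha> * P + \<beta> * Q)^2 - (\<beta> * P + \<alpha> * Q)^2 = (\<alpha>^2 - \<beta>^2) * (P^2 - Q^2)"
        by (simp add: power2_eq_square algebra_simps)
      ultimately show ?thesis using ab by (simp add: P_def Q_def)
    qed (simp add: boost_def)
    then show ?thesis unfolding sqd_diff_def by (simp add: sum_subtractf[symmetric])
  qed
  then show ?thesis using assms(1,2) by (auto simp: Eplus_pc_def boost_def)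
qed

section \<open>Boost invariance and the Pogorelov map\<close>

definition boost_orbit :: "nat \<Rightarrow> (bool \<times> 'v \<times> nat \<Rightarrow> real) set \<Rightarrow> (bool \<times> 'v \<times> nat \<Rightarrow> real) set" where
  "boost_orbit s X = {boost s c z | c z. c > 0 \<and> z \<in> X}"

lemma subset_boost_orbit: "X \<subseteq> boost_orbit s X"
proof
  fix z assume "z \<in> X"
  then show "z \<in> boost_orbit s X"
    unfolding boost_orbit_def using boost_1[of s z] by (intro CollectI exI[of _ "1::real"] exI[of _ z]) auto
qed

lemma irred_alg_zar_closure_boost_orbit:
  fixes X :: "(bool \<times> 'v \<times> nat \<Rightarrow> real) set"
  assumes irrX: "irred_alg UNIV X"
  shows "irred_alg UNIV (zar_closure UNIV (boost_orbit s X))"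
  unfolding irred_alg_def
proof (intro conjI allI impI)
  let ?W = "zar_closure UNIV (boost_orbit s X)"
  show "alg_set UNIV ?W" by (rule alg_set_zar_closure)
  show "?W \<noteq> {}"
    using irrX subset_boost_orbit subset_zar_closure by (fastforce simp: irred_alg_def)
  fix A B :: "(bool \<times> 'v \<times> nat \<Rightarrow> real) set"
  assume algA: "alg_set UNIV A" and algB: "alg_set UNIV B" and WAB: "?W = A \<union> B"
  have algX: "alg_set UNIV X" using irrX by (simp add: irred_alg_def)
  define L where "L A' = {c. c > (0::real) \<and> (\<forall>z\<in>X. boost s c z \<in> A')}" for A'
  have "{0<..} \<subseteq> L A \<union> L B"
  proof
    fix c :: real assume c: "c \<in> {0<..}"
    have "X = (X \<inter> {z. boost s c z \<in> A}) \<union> (X \<inter> {z. boost s c z \<in> B})"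
      using c WAB subset_zar_closure[of "boost_orbit s X"] unfolding boost_orbit_def by blast
    moreover have "alg_set UNIV (X \<inter> {z. boost s c z \<in> A'})" if "alg_set UNIV A'" for A'
      using alg_set_Int[OF algX alg_set_preimage[OF that polys_boost_UNIV]] .
    ultimately have "X = X \<inter> {z. boost s c z \<in> A} \<or> X = X \<inter> {z. boost s c z \<in> B}"
      using irrX algA algB unfolding irred_alg_def by blast
    then show "c \<in> L A \<union> L B" using c unfolding L_def by auto
  qed
  then have "infinite (L A) \<or> infinite (L B)"
    using infinite_Ioi[of "0::real"] finite_subset by auto
  moreover have "?W \<subseteq> A'" if L: "infinite (L A')" and algA': "alg_set UNIV A'" for A'
  proof (rule zar_closure_minimal[OF algA'])
    have "boost s c z \<in> A'" if "c > 0" "z \<in> X" for c z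
      by (rule boost_mem_if_infinitely_many[OF algA' L]) (use that in \<open>auto simp: L_def\<close>)
    then show "boost_orbit s X \<subseteq> A'" by (auto simp: boost_orbit_def)
  qed
  ultimately show "?W = A \<or> ?W = B" using WAB algA algB by blast
qed

lemma irred_component_boost_invariant:
  fixes X T :: "(bool \<times> 'v \<times> nat \<Rightarrow> real) set"
  assumes comp: "irred_component UNIV X T" and algT: "alg_set UNIV T"
    and Tinv: "\<And>c z. c > 0 \<Longrightarrow> z \<in> T \<Longrightarrow> boost s c z \<in> T"
    and "c > 0" "z \<in> X"
  shows "boost s c z \<in> X"
proof -
  let ?W = "zar_closure UNIV (boost_orbit s X)"
  have "boost_orbit s X \<subseteq> T"
    using Tinv comp by (auto simp: boost_orbit_def irred_component_def)
  then have "?W \<subseteq> T" by (rule zar_closure_minimal[OF algT])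
  moreover have "X \<subseteq> ?W" using subset_boost_orbit subset_zar_closure by blast
  ultimately have "?W = X"
    using comp irred_alg_zar_closure_boost_orbit unfolding irred_component_def by blast
  moreover have "boost s c z \<in> boost_orbit s X"
    using assms(4,5) unfolding boost_orbit_def by blast
  ultimately show ?thesis using subset_zar_closure by blast
qed

definition of_real_fun :: "('x \<Rightarrow> real) \<Rightarrow> ('x \<Rightarrow> complex)" where
  "of_real_fun z = (\<lambda>x. complex_of_real (z x))"

lemma boost_of_real_fun: "boost s (complex_of_real c) (of_real_fun z) = of_real_fun (boost s c z)"
  by (rule ext) (auto simp: boost_def of_real_fun_def of_real_inverse)

lemma zar_closure_of_real_boost_invariant:
  fixes X :: "(bool \<times> 'v \<times> nat \<Rightarrow> real) set"
  assumes Xinv: "\<And>c z. c > 0 \<Longrightarrow> z \<in> X \<Longrightarrow> boost s c z \<in> X"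
    and c: "c \<noteq> 0" and w: "w \<in> zar_closure UNIV (of_real_fun ` X)"
  shows "boost s c w \<in> zar_closure UNIV (of_real_fun ` X)"
proof -
  let ?C = "zar_closure UNIV (of_real_fun ` X)"
  have inf: "infinite (complex_of_real ` {0<..})"
    using finite_imageD[of complex_of_real "{0<..}"] infinite_Ioi[of "0::real"]
    by (auto simp: inj_on_def)
  have "boost s c (of_real_fun x) \<in> ?C" if x: "x \<in> X" for x
  proof (rule boost_mem_if_infinitely_many[OF alg_set_zar_closure inf _ _ c])
    show "\<forall>c'\<in>complex_of_real ` {0<..}. boost s c' (of_real_fun x) \<in> ?C"
      using Xinv x subset_zar_closure by (fastforce simp: boost_of_real_fun)
  qed auto
  then have "of_real_fun ` X \<subseteq> {w. boost s c w \<in> ?C}" by blast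
  moreover have "alg_set UNIV {w. boost s c w \<in> ?C}"
    by (rule alg_set_preimage[OF alg_set_zar_closure polys_boost_UNIV])
  ultimately show ?thesis using w zar_closure_minimal by blast
qed

lemma pc_pogorelov: "pc (pogorelov s e) = boost s \<i> (pc e)"
  by (rule ext) (auto simp: pogorelov_def pc_def boost_def Let_def field_simps)

lemma fst_pogorelov:
  "fst (pogorelov s e) = (\<lambda>x i. if i < s then \<i> * snd e x i else fst e x i)"
  by (auto simp: pogorelov_def Let_def field_simps fun_eq_iff)

lemma bij_betw_pogorelov:
  assumes "\<And>c w. c \<noteq> 0 \<Longrightarrow> w \<in> C \<Longrightarrow> boost s c w \<in> C"
  shows "bij_betw (pogorelov s) {e. pc e \<in> C} {e. pc e \<in> C}"
proof (rule bij_betw_byWitness[where f' = "\<lambda>e. unpc (boost s (- \<i>) (pc e))"])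
  have inv: "boost s \<i> (boost s (- \<i>) w) = w" "boost s (- \<i>) (boost s \<i> w) = w" for w
    by (simp_all add: boost_boost boost_1)
  show "\<forall>e\<in>{e. pc e \<in> C}. unpc (boost s (- \<i>) (pc (pogorelov s e))) = e"
    by (simp add: pc_pogorelov inv)
  show "\<forall>e\<in>{e. pc e \<in> C}. pogorelov s (unpc (boost s (- \<i>) (pc e))) = e"
    by (auto intro: pc_inj simp: pc_pogorelov inv)
  show "pogorelov s ` {e. pc e \<in> C} \<subseteq> {e. pc e \<in> C}"
    using assms by (auto simp: pc_pogorelov)
  show "(\<lambda>e. unpc (boost s (- \<i>) (pc e))) ` {e. pc e \<in> C} \<subseteq> {e. pc e \<in> C}"
    using assms by auto
qed

lemma generic_in_pogorelov:
  assumes bij: "bij_betw (pogorelov s) V V" and e: "generic_in V e"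
  shows "generic_in V (pogorelov s e)"
  unfolding generic_in_def
proof (intro conjI ballI impI)
  show "pogorelov s e \<in> V" using bij e by (auto simp: generic_in_def bij_betw_def)
  fix f z assume f: "f \<in> polys {x. algebraic x}" "f (pc (pogorelov s e)) = 0" and z: "z \<in> V"
  have "(\<lambda>w. f (boost s \<i> w)) \<in> polys {x. algebraic x}"
    by (rule polys_subst[OF f(1) polys_boost]) simp_all
  from e[unfolded generic_in_def, THEN conjunct2, rule_format, OF this]
  have van: "\<forall>z\<in>V. f (boost s \<i> (pc z)) = 0"
    using f(2) by (simp add: pc_pogorelov)
  have "z \<in> pogorelov s ` V" using bij z by (simp add: bij_betw_def)
  then obtain z' where "z' \<in> V" "z = pogorelov s z'" by blast
  then show "f (pc z) = 0" using van by (simp add: pc_pogorelov)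
qed

section \<open>Algebraic dependence on an irreducible set\<close>

definition depends_only_on :: "'x set \<Rightarrow> (('x \<Rightarrow> 'a) \<Rightarrow> 'b) \<Rightarrow> bool" where
  "depends_only_on U f \<longleftrightarrow> (\<forall>z z'. (\<forall>y\<in>U. z y = z' y) \<longrightarrow> f z = f z')"

definition polys_on :: "'x set \<Rightarrow> (('x \<Rightarrow> 'a::field_char_0) \<Rightarrow> 'a) set" where
  "polys_on U = {f \<in> polys UNIV. depends_only_on U f}"

lemma polys_on_polys: "f \<in> polys_on U \<Longrightarrow> f \<in> polys UNIV"
  by (simp add: polys_on_def)

lemma polys_on_const: "(\<lambda>_. c) \<in> polys_on U"
  by (auto simp: polys_on_def depends_only_on_def polys_const_UNIV)

lemma polys_on_var: "y \<in> U \<Longrightarrow> (\<lambda>z. z y) \<in> polys_on U"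
  unfolding polys_on_def depends_only_on_def by (auto intro: polys.pvar)

lemma polys_on_add: "f \<in> polys_on U \<Longrightarrow> g \<in> polys_on U \<Longrightarrow> (\<lambda>z. f z + g z) \<in> polys_on U"
  unfolding polys_on_def depends_only_on_def by (auto intro: polys.padd; metis)

lemma polys_on_mult: "f \<in> polys_on U \<Longrightarrow> g \<in> polys_on U \<Longrightarrow> (\<lambda>z. f z * g z) \<in> polys_on U"
  unfolding polys_on_def depends_only_on_def by (auto intro: polys.pmul; metis)

lemma polys_on_uminus: "f \<in> polys_on U \<Longrightarrow> (\<lambda>z. - f z) \<in> polys_on U"
  unfolding polys_on_def depends_only_on_def by (auto intro: polys_uminus)

lemma polys_on_diff: "f \<in> polys_on U \<Longrightarrow> g \<in> polys_on U \<Longrightarrow> (\<lambda>z. f z - g z) \<in> polys_on U"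
  unfolding polys_on_def depends_only_on_def by (auto intro: polys_diff; metis)

lemma polys_on_power: "f \<in> polys_on U \<Longrightarrow> (\<lambda>z. f z ^ n) \<in> polys_on U"
  unfolding polys_on_def depends_only_on_def by (auto intro: polys_power; metis)

lemma polys_on_sum:
  "finite A \<Longrightarrow> (\<And>a. a \<in> A \<Longrightarrow> F a \<in> polys_on U) \<Longrightarrow> (\<lambda>z. \<Sum>a\<in>A. F a z) \<in> polys_on U"
proof (induction A rule: finite_induct)
  case empty then show ?case using polys_on_const[of 0] by simp
next
  case (insert a A)
  then have "(\<lambda>z. F a z + (\<Sum>a\<in>A. F a z)) \<in> polys_on U" by (intro polys_on_add) auto
  then show ?case using insert by simp
qed

definition zero_outside :: "'x set \<Rightarrow> ('x \<Rightarrow> 'a::zero) \<Rightarrow> ('x \<Rightarrow> 'a)" where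
  "zero_outside U z = (\<lambda>v. if v \<in> U then z v else 0)"

lemma polys_on_zero_outside: "f \<in> polys UNIV \<Longrightarrow> (\<lambda>z. f (zero_outside U z)) \<in> polys_on U"
  unfolding polys_on_def depends_only_on_def
proof (intro CollectI conjI allI impI)
  assume "f \<in> polys UNIV"
  moreover have "(\<lambda>z. zero_outside U z y) \<in> polys UNIV" for y :: 'a
    by (cases "y \<in> U") (auto simp: zero_outside_def intro: polys.pvar polys_const_UNIV)
  ultimately show "(\<lambda>z. f (zero_outside U z)) \<in> polys UNIV" by (rule polys_subst)
next
  fix z z' :: "'a \<Rightarrow> 'b" assume "\<forall>y\<in>U. z y = z' y"
  then have "zero_outside U z = zero_outside U z'" by (auto simp: zero_outside_def)
  then show "f (zero_outside U z) = f (zero_outside U z')" by simp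
qed

lemma polys_poly_in_var:
  fixes f :: "('x \<Rightarrow> 'a::field_char_0) \<Rightarrow> 'a"
  assumes "f \<in> polys UNIV"
  shows "\<exists>pz. (\<forall>z. f z = poly (pz z) (z y)) \<and> (\<forall>z t. pz (z(y := t)) = pz z)
     \<and> (\<forall>j. (\<lambda>z. coeff (pz z) j) \<in> polys UNIV) \<and> (\<exists>m. \<forall>z. degree (pz z) \<le> m)"
  using assms
proof induction
  case (pconst c)
  show ?case by (rule exI[of _ "\<lambda>_. [:c:]"]) (auto intro: polys_const_UNIV)
next
  case (pvar x)
  show ?case
  proof (cases "x = y")
    case True
    then show ?thesis by (intro exI[of _ "\<lambda>_. [:0, 1:]"]) (auto intro: polys_const_UNIV)
  next
    case False
    have "(\<lambda>z. coeff [:z x:] j) \<in> polys UNIV" for j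
      by (cases j) (auto intro: polys_const_UNIV polys.pvar)
    then show ?thesis using False by (intro exI[of _ "\<lambda>z. [:z x:]"]) auto
  qed
next
  case (padd f g)
  obtain p1 m1 where 1: "\<forall>z. f z = poly (p1 z) (z y)" "\<forall>z t. p1 (z(y := t)) = p1 z"
     "\<forall>j. (\<lambda>z. coeff (p1 z) j) \<in> polys UNIV" "\<forall>z. degree (p1 z) \<le> m1" using padd.IH(1) by blast
  obtain p2 m2 where 2: "\<forall>z. g z = poly (p2 z) (z y)" "\<forall>z t. p2 (z(y := t)) = p2 z"
     "\<forall>j. (\<lambda>z. coeff (p2 z) j) \<in> polys UNIV" "\<forall>z. degree (p2 z) \<le> m2" using padd.IH(2) by blast
  have "\<forall>z. degree (p1 z + p2 z) \<le> max m1 m2"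
    using 1(4) 2(4) by (metis degree_add_le max.coboundedI1 max.coboundedI2)
  moreover have "(\<lambda>z. coeff (p1 z + p2 z) j) \<in> polys UNIV" for j
    using polys.padd[OF 1(3)[rule_format, of j] 2(3)[rule_format, of j]] by simp
  moreover have "\<forall>z t. p1 (z(y := t)) + p2 (z(y := t)) = p1 z + p2 z"
    using 1(2) 2(2) by simp
  moreover have "\<forall>z. f z + g z = poly (p1 z + p2 z) (z y)" using 1(1) 2(1) by simp
  ultimately show ?case by (intro exI[of _ "\<lambda>z. p1 z + p2 z"]) blast
next
  case (pmul f g)
  obtain p1 m1 where 1: "\<forall>z. f z = poly (p1 z) (z y)" "\<forall>z t. p1 (z(y := t)) = p1 z"
     "\<forall>j. (\<lambda>z. coeff (p1 z) j) \<in> polys UNIV" "\<forall>z. degree (p1 z) \<le> m1" using pmul.IH(1) by blast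
  obtain p2 m2 where 2: "\<forall>z. g z = poly (p2 z) (z y)" "\<forall>z t. p2 (z(y := t)) = p2 z"
     "\<forall>j. (\<lambda>z. coeff (p2 z) j) \<in> polys UNIV" "\<forall>z. degree (p2 z) \<le> m2" using pmul.IH(2) by blast
  have "\<forall>z. degree (p1 z * p2 z) \<le> m1 + m2"
    using 1(4) 2(4) by (meson degree_mult_le le_trans add_mono)
  moreover have "(\<lambda>z. coeff (p1 z * p2 z) j) \<in> polys UNIV" for j
    unfolding coeff_mult by (intro polys_sum polys.pmul) (use 1(3) 2(3) in auto)
  moreover have "\<forall>z t. p1 (z(y := t)) * p2 (z(y := t)) = p1 z * p2 z"
    using 1(2) 2(2) by simp
  moreover have "\<forall>z. f z * g z = poly (p1 z * p2 z) (z y)" using 1(1) 2(1) by simp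
  ultimately show ?case by (intro exI[of _ "\<lambda>z. p1 z * p2 z"]) blast
qed

lemma polys_on_insert_decomp:
  fixes f :: "('x \<Rightarrow> 'a::field_char_0) \<Rightarrow> 'a"
  assumes "y \<notin> U" "f \<in> polys_on (insert y U)"
  shows "\<exists>m a. (\<forall>j\<le>m. a j \<in> polys_on U) \<and> (\<forall>z. f z = (\<Sum>j\<le>m. a j z * z y ^ j))"
proof -
  obtain pz m where P: "\<forall>z. f z = poly (pz z) (z y)" "\<forall>z t. pz (z(y := t)) = pz z"
     "\<forall>j. (\<lambda>z. coeff (pz z) j) \<in> polys UNIV" "\<forall>z. degree (pz z) \<le> m"
    using polys_poly_in_var[OF polys_on_polys[OF assms(2)], of y] by blast
  define a where "a j = (\<lambda>z. coeff (pz (zero_outside U z)) j)" for j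
  have "f z = (\<Sum>j\<le>m. a j z * z y ^ j)" for z
  proof -
    have "f z = f ((zero_outside U z)(y := z y))"
      using assms unfolding polys_on_def depends_only_on_def by (auto simp: zero_outside_def)
    also have "\<dots> = poly (pz (zero_outside U z)) (z y)" using P(1,2) by simp
    also have "\<dots> = (\<Sum>j\<le>degree (pz (zero_outside U z)). a j z * z y ^ j)"
      by (simp add: poly_altdef a_def)
    also have "\<dots> = (\<Sum>j\<le>m. a j z * z y ^ j)"
      using P(4) by (intro sum.mono_neutral_left) (auto simp: a_def coeff_eq_0)
    finally show ?thesis .
  qed
  moreover have "a j \<in> polys_on U" for j
    unfolding a_def using polys_on_zero_outside[OF P(3)[rule_format, of j]] by simp
  ultimately show ?thesis by blast
qed

definition alg_indep_on :: "('x \<Rightarrow> 'a::field_char_0) set \<Rightarrow> 'x set \<Rightarrow> bool" where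
  "alg_indep_on Y U \<longleftrightarrow> (\<forall>f\<in>polys_on U. (\<forall>z\<in>Y. f z = 0) \<longrightarrow> (\<forall>z. f z = 0))"

definition alg_over :: "('x \<Rightarrow> 'a::field_char_0) set \<Rightarrow> 'x set \<Rightarrow> (('x \<Rightarrow> 'a) \<Rightarrow> 'a) \<Rightarrow> bool" where
  "alg_over Y U h \<longleftrightarrow> (\<exists>N lam. (\<forall>t\<le>N. lam t \<in> polys_on U) \<and> (\<exists>t\<le>N. \<exists>z\<in>Y. lam t z \<noteq> 0)
      \<and> (\<forall>z\<in>Y. (\<Sum>t\<le>N. lam t z * h z ^ t) = 0))"

definition in_span :: "('x \<Rightarrow> 'a::field_char_0) set \<Rightarrow> 'x set \<Rightarrow> 'k set \<Rightarrow> ('k \<Rightarrow> ('x \<Rightarrow> 'a) \<Rightarrow> 'a)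
    \<Rightarrow> (('x \<Rightarrow> 'a) \<Rightarrow> 'a) \<Rightarrow> bool" where
  "in_span Y U I F f \<longleftrightarrow> (\<exists>B. (\<forall>k\<in>I. B k \<in> polys_on U) \<and> (\<forall>z\<in>Y. f z = (\<Sum>k\<in>I. B k z * F k z)))"

lemma alg_indep_on_mono: "alg_indep_on Y U \<Longrightarrow> Y \<subseteq> Y' \<Longrightarrow> alg_indep_on Y' U"
  unfolding alg_indep_on_def by blast

lemma irred_alg_mult_nonzero:
  assumes "irred_alg UNIV Y" "a \<in> polys UNIV" "b \<in> polys UNIV"
    and "\<exists>z\<in>Y. a z \<noteq> 0" "\<exists>z\<in>Y. b z \<noteq> 0"
  shows "\<exists>z\<in>Y. a z * b z \<noteq> 0"
  using irred_alg_product_vanishes[OF assms(1-3)] assms(4,5) by blast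

lemma alg_over_leading:
  assumes "alg_over Y U h"
  shows "\<exists>m lam. 0 < m \<and> (\<forall>t\<le>m. lam t \<in> polys_on U) \<and> (\<exists>z\<in>Y. lam m z \<noteq> 0)
     \<and> (\<forall>z\<in>Y. (\<Sum>t\<le>m. lam t z * h z ^ t) = 0)"
proof -
  obtain N lam where L: "\<forall>t\<le>N. lam t \<in> polys_on U" "\<exists>t\<le>N. \<exists>z\<in>Y. lam t z \<noteq> 0"
      "\<forall>z\<in>Y. (\<Sum>t\<le>N. lam t z * h z ^ t) = 0"
    using assms unfolding alg_over_def by blast
  define S where "S = {t. t \<le> N \<and> (\<exists>z\<in>Y. lam t z \<noteq> 0)}"
  have fS: "finite S" and neS: "S \<noteq> {}" using L(2) by (auto simp: S_def)
  define m where "m = Max S"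
  have mS: "m \<in> S" using fS neS by (simp add: m_def)
  then have mN: "m \<le> N" by (simp add: S_def)
  have above: "\<forall>z\<in>Y. lam t z = 0" if "m < t" "t \<le> N" for t
  proof (rule ccontr)
    assume "\<not> (\<forall>z\<in>Y. lam t z = 0)"
    then have "t \<in> S" using that by (auto simp: S_def)
    then show False using that Max_ge[OF fS, of t] by (simp add: m_def)
  qed
  have rel: "\<forall>z\<in>Y. (\<Sum>t\<le>m. lam t z * h z ^ t) = 0"
  proof
    fix z assume z: "z \<in> Y"
    have "(\<Sum>t\<le>N. lam t z * h z ^ t) = (\<Sum>t\<le>m. lam t z * h z ^ t)"
      using above z mN by (intro sum.mono_neutral_right) auto
    then show "(\<Sum>t\<le>m. lam t z * h z ^ t) = 0" using L(3) z by simp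
  qed
  \<comment> \<open>a relation of degree 0 would say that the nonvanishing coefficient vanishes\<close>
  have "0 < m" using rel mS by (cases m) (auto simp: S_def)
  then show ?thesis using rel mS mN L(1) by (intro exI[of _ m] exI[of _ lam]) (auto simp: S_def)
qed

lemma leading_power_reduce:
  assumes m: "0 < m" and lam: "\<forall>t\<le>m. lam t \<in> polys_on U"
    and rel: "\<forall>z\<in>Y. (\<Sum>t\<le>m. lam t z * h z ^ t) = 0"
  shows "\<exists>\<beta>. (\<forall>i<m. \<beta> i \<in> polys_on U) \<and> (\<forall>z\<in>Y. lam m z ^ e * h z ^ e = (\<Sum>i<m. \<beta> i z * h z ^ i))"
proof (induction e)
  case 0
  obtain m' where m': "m = Suc m'" using m by (cases m) auto
  show ?case
  proof (rule exI[of _ "\<lambda>i z. if i = 0 then 1 else 0"], intro conjI)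
    show "\<forall>i<m. (\<lambda>z. if i = 0 then 1 else 0) \<in> polys_on U"
      using polys_on_const[of 1 U] polys_on_const[of 0 U] by auto
    show "\<forall>z\<in>Y. lam m z ^ 0 * h z ^ 0 = (\<Sum>i<m. (if i = 0 then 1 else 0) * h z ^ i)"
      unfolding m' sum.lessThan_Suc_shift by simp
  qed
next
  case (Suc e)
  obtain \<beta> where B: "\<forall>i<m. \<beta> i \<in> polys_on U" "\<forall>z\<in>Y. lam m z ^ e * h z ^ e = (\<Sum>i<m. \<beta> i z * h z ^ i)"
    using Suc.IH by blast
  obtain m' where m': "m = Suc m'" using m by (cases m) auto
  \<comment> \<open>multiply by \<open>lam m * h\<close> and eliminate \<open>h ^ m\<close> with the relation\<close>
  define \<beta>' where "\<beta>' i = (\<lambda>z. (if i = 0 then 0 else lam m z * \<beta> (i - 1) z) - \<beta> m' z * lam i z)" for i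
  show ?case
  proof (rule exI[of _ \<beta>'], intro conjI ballI allI impI)
    fix i assume "i < m"
    have "(\<lambda>z. (if i = 0 then 0 else lam m z * \<beta> (i - 1) z)) \<in> polys_on U"
      using B(1) lam \<open>i < m\<close> by (cases i) (auto intro: polys_on_mult polys_on_const)
    then show "\<beta>' i \<in> polys_on U" unfolding \<beta>'_def
      using B(1) lam \<open>i < m\<close> m' by (intro polys_on_diff polys_on_mult) auto
  next
    fix z assume z: "z \<in> Y"
    have hm: "lam m z * h z ^ m = - (\<Sum>i<m. lam i z * h z ^ i)"
      using rel z by (simp add: sum.atMost_Suc m' lessThan_Suc_atMost[symmetric] add_eq_0_iff2
          eq_neg_iff_add_eq_0 add.commute)
    have "lam m z ^ Suc e * h z ^ Suc e = lam m z * h z * (lam m z ^ e * h z ^ e)"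
      by (simp add: algebra_simps)
    also have "\<dots> = lam m z * h z * (\<Sum>i<m. \<beta> i z * h z ^ i)" using B(2) z by simp
    also have "\<dots> = (\<Sum>i<m'. lam m z * \<beta> i z * h z ^ Suc i) + \<beta> m' z * (lam m z * h z ^ m)"
      by (simp add: m' sum_distrib_left algebra_simps)
    also have "\<dots> = (\<Sum>i<m'. lam m z * \<beta> i z * h z ^ Suc i) - \<beta> m' z * (\<Sum>i<m. lam i z * h z ^ i)"
      using hm by simp
    also have "(\<Sum>i<m'. lam m z * \<beta> i z * h z ^ Suc i)
        = (\<Sum>i<m. (if i = 0 then 0 else lam m z * \<beta> (i - 1) z) * h z ^ i)"
      unfolding m' sum.lessThan_Suc_shift by simp
    finally show "lam m z ^ Suc e * h z ^ Suc e = (\<Sum>i<m. \<beta>' i z * h z ^ i)"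
      by (simp add: \<beta>'_def sum_distrib_left sum_subtractf algebra_simps)
  qed
qed

text \<open>A homogeneous linear system with more unknowns than equations has a nontrivial solution
  over the coordinate ring of an irreducible set, which is a domain.\<close>
lemma homogeneous_system_solution:
  fixes Y :: "('x \<Rightarrow> 'a::field_char_0) set" and I :: "'k set" and T :: "'t set"
  assumes irr: "irred_alg UNIV Y" and "finite I" "finite T" "card I < card T"
    and "\<forall>t\<in>T. \<forall>k\<in>I. B t k \<in> polys_on U"
  shows "\<exists>lam. (\<forall>t\<in>T. lam t \<in> polys_on U) \<and> (\<exists>t\<in>T. \<exists>z\<in>Y. lam t z \<noteq> 0)
       \<and> (\<forall>k\<in>I. \<forall>z\<in>Y. (\<Sum>t\<in>T. lam t z * B t k z) = 0)"
  using assms(2-5)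
proof (induction I arbitrary: T B rule: finite_induct)
  case empty
  then obtain t0 where t0: "t0 \<in> T" by fastforce
  obtain z0 where z0: "z0 \<in> Y" using irr by (auto simp: irred_alg_def)
  show ?case
    using t0 z0 polys_on_const[of 1 U] polys_on_const[of 0 U]
    by (intro exI[of _ "\<lambda>t z. if t = t0 then 1 else 0"]) auto
next
  case (insert k I)
  have cI: "card I < card T" using insert by simp
  show ?case
  proof (cases "\<forall>t\<in>T. \<forall>z\<in>Y. B t k z = 0")
    case True
    then show ?thesis using insert.IH[OF insert.prems(1) cI] insert.prems(3) by auto
  next
    case False
    then obtain t0 z0 where t0: "t0 \<in> T" "z0 \<in> Y" "B t0 k z0 \<noteq> 0" by blast
    define T' where "T' = T - {t0}"
    \<comment> \<open>eliminate the equation \<open>k\<close> using the unknown \<open>t0\<close>\<close>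
    define B' where "B' t k' = (\<lambda>z. B t0 k z * B t k' z - B t k z * B t0 k' z)" for t k'
    have "card I < card T'" using insert t0 by (simp add: T'_def)
    moreover have "\<forall>t\<in>T'. \<forall>k'\<in>I. B' t k' \<in> polys_on U"
      using insert.prems(3) t0 by (auto simp: B'_def T'_def intro!: polys_on_diff polys_on_mult)
    ultimately obtain mu where mu: "\<forall>t\<in>T'. mu t \<in> polys_on U" "\<exists>t\<in>T'. \<exists>z\<in>Y. mu t z \<noteq> 0"
        "\<forall>k'\<in>I. \<forall>z\<in>Y. (\<Sum>t\<in>T'. mu t z * B' t k' z) = 0"
      using insert.IH[of T' B'] insert.prems(1) by (auto simp: T'_def)
    define lam where "lam t = (if t = t0 then (\<lambda>z. - (\<Sum>t'\<in>T'. mu t' z * B t' k z))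
        else (\<lambda>z. mu t z * B t0 k z))" for t
    have eq: "(\<Sum>t\<in>T. lam t z * B t k' z) = (\<Sum>t\<in>T'. mu t z * B' t k' z)" for z k'
    proof -
      have "(\<Sum>t\<in>T. lam t z * B t k' z) = lam t0 z * B t0 k' z + (\<Sum>t\<in>T'. lam t z * B t k' z)"
        using t0 insert.prems(1) by (simp add: T'_def sum.remove)
      also have "(\<Sum>t\<in>T'. lam t z * B t k' z) = (\<Sum>t\<in>T'. mu t z * B t0 k z * B t k' z)"
        by (rule sum.cong) (auto simp: lam_def T'_def)
      finally have "(\<Sum>t\<in>T. lam t z * B t k' z) = (\<Sum>t\<in>T'. mu t z * B t0 k z * B t k' z)
          - (\<Sum>t\<in>T'. mu t z * B t k z) * B t0 k' z"
        by (simp add: lam_def)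
      then show ?thesis
        by (simp add: B'_def sum_distrib_left sum_subtractf right_diff_distrib mult_ac)
    qed
    show ?thesis
    proof (intro exI[of _ lam] conjI ballI)
      fix t assume "t \<in> T"
      then show "lam t \<in> polys_on U"
        using mu(1) insert.prems(1,3) t0 unfolding lam_def T'_def
        by (auto intro!: polys_on_uminus polys_on_sum polys_on_mult)
    next
      obtain t1 z1 where t1: "t1 \<in> T'" "z1 \<in> Y" "mu t1 z1 \<noteq> 0" using mu(2) by blast
      have "\<exists>z\<in>Y. mu t1 z * B t0 k z \<noteq> 0"
        using irred_alg_mult_nonzero[OF irr, of "mu t1" "B t0 k"] mu(1) t1 t0 insert.prems(3)
        by (auto simp: T'_def intro: polys_on_polys)
      then show "\<exists>t\<in>T. \<exists>z\<in>Y. lam t z \<noteq> 0" using t1 by (auto simp: lam_def T'_def)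
    next
      fix k' z assume "k' \<in> insert k I" "z \<in> Y"
      then show "(\<Sum>t\<in>T. lam t z * B t k' z) = 0"
        using mu(3) by (auto simp: eq B'_def)
    qed
  qed
qed

lemma in_span_sum:
  assumes "finite A" "\<And>a. a \<in> A \<Longrightarrow> in_span Y U I F (G a)"
  shows "in_span Y U I F (\<lambda>z. \<Sum>a\<in>A. G a z)"
  using assms
proof (induction A rule: finite_induct)
  case empty
  show ?case unfolding in_span_def
    by (rule exI[of _ "\<lambda>k z. 0"]) (auto intro: polys_on_const)
next
  case (insert a A)
  obtain B1 where B1: "\<forall>k\<in>I. B1 k \<in> polys_on U" "\<forall>z\<in>Y. G a z = (\<Sum>k\<in>I. B1 k z * F k z)"
    using insert.prems unfolding in_span_def by blast
  obtain B2 where B2: "\<forall>k\<in>I. B2 k \<in> polys_on U" "\<forall>z\<in>Y. (\<Sum>a\<in>A. G a z) = (\<Sum>k\<in>I. B2 k z * F k z)"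
    using insert.IH insert.prems unfolding in_span_def by blast
  show ?case unfolding in_span_def
  proof (rule exI[of _ "\<lambda>k z. B1 k z + B2 k z"], intro conjI ballI)
    fix k assume "k \<in> I" then show "(\<lambda>z. B1 k z + B2 k z) \<in> polys_on U"
      using B1 B2 by (simp add: polys_on_add)
  next
    fix z assume "z \<in> Y"
    then show "(\<Sum>a\<in>insert a A. G a z) = (\<Sum>k\<in>I. (B1 k z + B2 k z) * F k z)"
      using insert.hyps B1 B2 by (simp add: sum.distrib distrib_right)
  qed
qed

lemma in_span_mult:
  assumes "in_span Y U I F f" "a \<in> polys_on U"
  shows "in_span Y U I F (\<lambda>z. a z * f z)"
proof -
  obtain B where B: "\<forall>k\<in>I. B k \<in> polys_on U" "\<forall>z\<in>Y. f z = (\<Sum>k\<in>I. B k z * F k z)"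
    using assms(1) unfolding in_span_def by blast
  show ?thesis unfolding in_span_def
    using B assms(2)
    by (intro exI[of _ "\<lambda>k z. a z * B k z"]) (simp add: polys_on_mult sum_distrib_left mult.assoc)
qed

lemma in_span_cong: "in_span Y U I F f \<Longrightarrow> (\<And>z. z \<in> Y \<Longrightarrow> f z = g z) \<Longrightarrow> in_span Y U I F g"
  unfolding in_span_def by auto

text \<open>Any \<open>card I + 1\<close> elements of a module with \<open>card I\<close> generators are linearly
  dependent.\<close>
lemma alg_over_of_in_span:
  assumes irr: "irred_alg UNIV Y" and fI: "finite I"
    and w: "w \<in> polys_on U" "\<exists>z\<in>Y. w z \<noteq> 0"
    and sp: "\<And>t. t \<le> card I \<Longrightarrow> in_span Y U I F (\<lambda>z. w z ^ t * \<Phi> z ^ t)"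
  shows "alg_over Y U \<Phi>"
proof -
  define N where "N = card I"
  have "\<forall>t. \<exists>Bt. t \<le> N \<longrightarrow> (\<forall>k\<in>I. Bt k \<in> polys_on U)
      \<and> (\<forall>z\<in>Y. w z ^ t * \<Phi> z ^ t = (\<Sum>k\<in>I. Bt k z * F k z))"
    using sp unfolding N_def in_span_def by blast
  then obtain B where B: "\<forall>t\<le>N. (\<forall>k\<in>I. B t k \<in> polys_on U)
      \<and> (\<forall>z\<in>Y. w z ^ t * \<Phi> z ^ t = (\<Sum>k\<in>I. B t k z * F k z))"
    by metis
  obtain lam where L: "\<forall>t\<in>{..N}. lam t \<in> polys_on U" "\<exists>t\<in>{..N}. \<exists>z\<in>Y. lam t z \<noteq> 0"
      "\<forall>k\<in>I. \<forall>z\<in>Y. (\<Sum>t\<in>{..N}. lam t z * B t k z) = 0"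
    using homogeneous_system_solution[OF irr fI, of "{..N}" B U] B by (auto simp: N_def)
  show ?thesis unfolding alg_over_def
  proof (rule exI[of _ N], rule exI[of _ "\<lambda>t z. lam t z * w z ^ t"], intro conjI allI impI ballI)
    fix t assume "t \<le> N"
    then show "(\<lambda>z. lam t z * w z ^ t) \<in> polys_on U"
      using L(1) w(1) by (auto intro: polys_on_mult polys_on_power)
  next
    obtain t1 z1 where t1: "t1 \<le> N" "z1 \<in> Y" "lam t1 z1 \<noteq> 0" using L(2) by auto
    have "\<exists>z\<in>Y. lam t1 z * w z ^ t1 \<noteq> 0"
      using irred_alg_mult_nonzero[OF irr, of "lam t1" "\<lambda>z. w z ^ t1"] L(1) t1 w
      by (auto intro: polys_on_polys polys_on_power)
    then show "\<exists>t\<le>N. \<exists>z\<in>Y. lam t z * w z ^ t \<noteq> 0" using t1 by auto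
  next
    fix z assume z: "z \<in> Y"
    have "(\<Sum>t\<le>N. lam t z * w z ^ t * \<Phi> z ^ t) = (\<Sum>t\<le>N. lam t z * (\<Sum>k\<in>I. B t k z * F k z))"
      using B z by (intro sum.cong) (auto simp: mult.assoc)
    also have "\<dots> = (\<Sum>k\<in>I. (\<Sum>t\<le>N. lam t z * B t k z) * F k z)"
      by (simp only: sum_distrib_left sum_distrib_right mult.assoc) (rule sum.swap)
    also have "\<dots> = 0" using L(3) z by simp
    finally show "(\<Sum>t\<le>N. lam t z * w z ^ t * \<Phi> z ^ t) = 0" .
  qed
qed

lemma in_span_power_products:
  assumes g: "0 < m" "\<forall>t\<le>m. lam t \<in> polys_on U" "\<forall>z\<in>Y. (\<Sum>t\<le>m. lam t z * g z ^ t) = 0"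
    and h: "0 < n" "\<forall>t\<le>n. mu t \<in> polys_on U" "\<forall>z\<in>Y. (\<Sum>t\<le>n. mu t z * h z ^ t) = 0"
  shows "in_span Y U ({..<m} \<times> {..<n}) (\<lambda>(i, j) z. g z ^ i * h z ^ j)
      (\<lambda>z. (lam m z ^ e * g z ^ e) * (mu n z ^ f * h z ^ f))"
proof -
  obtain \<beta> where \<beta>: "\<forall>i<m. \<beta> i \<in> polys_on U" "\<forall>z\<in>Y. lam m z ^ e * g z ^ e = (\<Sum>i<m. \<beta> i z * g z ^ i)"
    using leading_power_reduce[OF g] by blast
  obtain \<gamma> where \<gamma>: "\<forall>j<n. \<gamma> j \<in> polys_on U" "\<forall>z\<in>Y. mu n z ^ f * h z ^ f = (\<Sum>j<n. \<gamma> j z * h z ^ j)"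
    using leading_power_reduce[OF h] by blast
  show ?thesis unfolding in_span_def
  proof (rule exI[of _ "\<lambda>(i, j) z. \<beta> i z * \<gamma> j z"], intro conjI ballI)
    fix k assume "k \<in> {..<m} \<times> {..<n}"
    then show "(case k of (i, j) \<Rightarrow> \<lambda>z. \<beta> i z * \<gamma> j z) \<in> polys_on U"
      using \<beta> \<gamma> by (auto intro: polys_on_mult)
  next
    fix z assume z: "z \<in> Y"
    have "(lam m z ^ e * g z ^ e) * (mu n z ^ f * h z ^ f)
        = (\<Sum>i<m. \<beta> i z * g z ^ i) * (\<Sum>j<n. \<gamma> j z * h z ^ j)"
      using \<beta> \<gamma> z by simp
    also have "\<dots> = (\<Sum>(i, j)\<in>{..<m} \<times> {..<n}. (\<beta> i z * g z ^ i) * (\<gamma> j z * h z ^ j))"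
      unfolding sum_product by (rule sum.cartesian_product)
    finally show "(lam m z ^ e * g z ^ e) * (mu n z ^ f * h z ^ f)
        = (\<Sum>k\<in>{..<m} \<times> {..<n}. (case k of (i, j) \<Rightarrow> \<lambda>z. \<beta> i z * \<gamma> j z) z
            * (case k of (i, j) \<Rightarrow> \<lambda>z. g z ^ i * h z ^ j) z)"
      by (simp add: split_def mult_ac)
  qed
qed

lemma binomial_scaled:
  fixes c d g h :: "'a::comm_ring_1"
  shows "(c * d) ^ t * (g + h) ^ t = (\<Sum>e\<le>t. (of_nat (t choose e) * c ^ (t - e) * d ^ e)
      * ((c ^ e * g ^ e) * (d ^ (t - e) * h ^ (t - e))))"
proof -
  have "(c * d) ^ t * (g + h) ^ t = (\<Sum>e\<le>t. (c * d) ^ t * (of_nat (t choose e) * g ^ e * h ^ (t - e)))"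
    by (simp add: binomial_ring sum_distrib_left)
  also have "\<dots> = (\<Sum>e\<le>t. (of_nat (t choose e) * c ^ (t - e) * d ^ e)
      * ((c ^ e * g ^ e) * (d ^ (t - e) * h ^ (t - e))))"
  proof (rule sum.cong)
    fix e assume "e \<in> {..t}"
    then obtain r where r: "t = e + r" by (auto dest: le_Suc_ex)
    show "(c * d) ^ t * (of_nat (t choose e) * g ^ e * h ^ (t - e))
        = (of_nat (t choose e) * c ^ (t - e) * d ^ e) * ((c ^ e * g ^ e) * (d ^ (t - e) * h ^ (t - e)))"
      unfolding r by (simp add: power_add power_mult_distrib mult_ac)
  qed simp
  finally show ?thesis .
qed

text \<open>The powers of \<open>g * h\<close> and of \<open>g + h\<close>, scaled by powers of the leading
  coefficients, stay in the finitely generated module spanned by the \<open>g ^ i * h ^ j\<close>.\<close>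
lemma alg_over_add_mult:
  assumes irr: "irred_alg UNIV Y" and g: "alg_over Y U g" and h: "alg_over Y U h"
  shows "alg_over Y U (\<lambda>z. g z + h z)" "alg_over Y U (\<lambda>z. g z * h z)"
proof -
  obtain m lam where G: "0 < m" "\<forall>t\<le>m. lam t \<in> polys_on U" "\<exists>z\<in>Y. lam m z \<noteq> 0"
     "\<forall>z\<in>Y. (\<Sum>t\<le>m. lam t z * g z ^ t) = 0" using alg_over_leading[OF g] by blast
  obtain n mu where H: "0 < n" "\<forall>t\<le>n. mu t \<in> polys_on U" "\<exists>z\<in>Y. mu n z \<noteq> 0"
     "\<forall>z\<in>Y. (\<Sum>t\<le>n. mu t z * h z ^ t) = 0" using alg_over_leading[OF h] by blast
  define c where "c = lam m"
  define d where "d = mu n"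
  have cd: "c \<in> polys_on U" "d \<in> polys_on U" using G H by (auto simp: c_def d_def)
  define I where "I = {..<m} \<times> {..<n}"
  define F where "F = (\<lambda>(i, j) z. g z ^ i * h z ^ j)"
  have fI: "finite I" by (simp add: I_def)
  have sp: "in_span Y U I F (\<lambda>z. (c z ^ e * g z ^ e) * (d z ^ f * h z ^ f))" for e f
    unfolding I_def F_def c_def d_def by (rule in_span_power_products[OF G(1,2,4) H(1,2,4)])
  define w where "w = (\<lambda>z. c z * d z)"
  have w: "w \<in> polys_on U" "\<exists>z\<in>Y. w z \<noteq> 0"
    unfolding w_def using cd irred_alg_mult_nonzero[OF irr, of c d] G(3) H(3)
    by (auto simp: c_def d_def intro: polys_on_polys polys_on_mult)
  show "alg_over Y U (\<lambda>z. g z * h z)"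
  proof (rule alg_over_of_in_span[OF irr fI w])
    fix t
    show "in_span Y U I F (\<lambda>z. w z ^ t * (g z * h z) ^ t)"
      by (rule in_span_cong[OF sp[of t t]]) (simp add: w_def power_mult_distrib mult_ac)
  qed
  show "alg_over Y U (\<lambda>z. g z + h z)"
  proof (rule alg_over_of_in_span[OF irr fI w])
    fix t
    have "in_span Y U I F (\<lambda>z. (of_nat (t choose e) * c z ^ (t - e) * d z ^ e)
        * ((c z ^ e * g z ^ e) * (d z ^ (t - e) * h z ^ (t - e))))" for e
      using cd by (intro in_span_mult[OF sp] polys_on_mult polys_on_power polys_on_const)
    then have "in_span Y U I F (\<lambda>z. \<Sum>e\<le>t. (of_nat (t choose e) * c z ^ (t - e) * d z ^ e)
        * ((c z ^ e * g z ^ e) * (d z ^ (t - e) * h z ^ (t - e))))"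
      by (intro in_span_sum) auto
    moreover have "(\<Sum>e\<le>t. (of_nat (t choose e) * c z ^ (t - e) * d z ^ e)
        * ((c z ^ e * g z ^ e) * (d z ^ (t - e) * h z ^ (t - e)))) = w z ^ t * (g z + h z) ^ t" for z
      unfolding w_def by (rule binomial_scaled[symmetric])
    ultimately show "in_span Y U I F (\<lambda>z. w z ^ t * (g z + h z) ^ t)"
      by (rule in_span_cong)
  qed
qed

lemma alg_over_of_linear:
  assumes "Y \<noteq> {}" "b \<in> polys_on U" "\<forall>z\<in>Y. b z + h z = 0"
  shows "alg_over Y U h"
  unfolding alg_over_def
proof (rule exI[of _ "1::nat"], rule exI[of _ "\<lambda>t::nat. if t = 0 then b else (\<lambda>_. 1)"], intro conjI)
  show "\<forall>t\<le>1::nat. (if t = 0 then b else (\<lambda>_. 1)) \<in> polys_on U"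
    using assms(2) polys_on_const by auto
  show "\<exists>t\<le>1::nat. \<exists>z\<in>Y. (if t = 0 then b else (\<lambda>_. 1)) z \<noteq> 0"
    using assms(1) by force
  show "\<forall>z\<in>Y. (\<Sum>t\<le>1::nat. (if t = 0 then b else (\<lambda>_. 1)) z * h z ^ t) = 0"
    using assms(3) by simp
qed

lemma alg_over_polys:
  assumes irr: "irred_alg UNIV Y" and coords: "\<And>y. alg_over Y U (\<lambda>z. z y)"
    and f: "f \<in> polys UNIV"
  shows "alg_over Y U f"
  using f
proof induction
  case (pconst c)
  show ?case using irr
    by (intro alg_over_of_linear[of _ "\<lambda>_. - c"]) (auto simp: irred_alg_def intro: polys_on_const)
qed (use coords alg_over_add_mult[OF irr] in auto)

section \<open>Dimension of coordinate subspaces\<close>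

definition coord_subspace :: "'x set \<Rightarrow> ('x \<Rightarrow> 'a::zero) set" where
  "coord_subspace V = {z. \<forall>y. y \<notin> V \<longrightarrow> z y = 0}"

lemma coord_subspace_eq_zero_set: "coord_subspace V = zero_set ((\<lambda>y z. z y) ` (- V))"
  by (auto simp: coord_subspace_def zero_set_def)

lemma alg_set_coord_subspace: "alg_set K (coord_subspace V)"
  unfolding coord_subspace_eq_zero_set by (rule alg_set_zero_set) (auto intro: polys.pvar)

lemma alg_over_coord:
  assumes Y: "Y \<noteq> {}" "Y \<subseteq> coord_subspace V" and ind: "alg_indep_on Y U"
    and dep: "\<And>w. w \<in> V - U \<Longrightarrow> \<not> alg_indep_on Y (insert w U)"
  shows "alg_over Y U (\<lambda>z. z y)"
proof -
  consider "y \<in> U" | "y \<notin> V" | "y \<in> V - U" by blast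
  then show ?thesis
  proof cases
    case 1
    then show ?thesis using Y
      by (intro alg_over_of_linear[of _ "\<lambda>z. - z y"]) (auto intro: polys_on_uminus polys_on_var)
  next
    case 2
    then show ?thesis using Y
      by (intro alg_over_of_linear[of _ "\<lambda>_. 0"]) (auto simp: coord_subspace_def intro: polys_on_const)
  next
    case 3
    then obtain f where f: "f \<in> polys_on (insert y U)" "\<forall>z\<in>Y. f z = 0" "\<exists>z. f z \<noteq> 0"
      using dep unfolding alg_indep_on_def by blast
    obtain m a where a: "\<forall>j\<le>m. a j \<in> polys_on U" "\<forall>z. f z = (\<Sum>j\<le>m. a j z * z y ^ j)"
      using polys_on_insert_decomp[of y U f] 3 f(1) by blast
    \<comment> \<open>not all coefficients vanish on \<open>Y\<close>, as they would then vanish identically\<close>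
    have "\<exists>j\<le>m. \<exists>z\<in>Y. a j z \<noteq> 0"
    proof (rule ccontr)
      assume "\<not> (\<exists>j\<le>m. \<exists>z\<in>Y. a j z \<noteq> 0)"
      then have "\<forall>j\<le>m. \<forall>z. a j z = 0" using ind a(1) unfolding alg_indep_on_def by blast
      then show False using a(2) f(3) by simp
    qed
    then show ?thesis unfolding alg_over_def using a f(2) by (intro exI[of _ m] exI[of _ a]) auto
  qed
qed

text \<open>Divide the relation of \<open>h\<close> on the irreducible \<open>Y'\<close> by the largest possible power
  of \<open>h\<close>: if \<open>h\<close> did not vanish on \<open>Y'\<close>, the lowest coefficient would vanish on \<open>Y\<close>,
  contradicting independence.\<close>
lemma alg_over_vanishing_on_subset:
  assumes irr: "irred_alg UNIV Y'" and sub: "Y \<subseteq> Y'" and ind: "alg_indep_on Y U"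
    and h: "h \<in> polys UNIV" "\<forall>z\<in>Y. h z = 0" and alg: "alg_over Y' U h"
  shows "\<forall>z\<in>Y'. h z = 0"
proof (rule ccontr)
  assume "\<not> (\<forall>z\<in>Y'. h z = 0)"
  then obtain z0 where z0: "z0 \<in> Y'" "h z0 \<noteq> 0" by blast
  obtain N lam where L: "\<forall>t\<le>N. lam t \<in> polys_on U" "\<exists>t\<le>N. \<exists>z\<in>Y'. lam t z \<noteq> 0"
      "\<forall>z\<in>Y'. (\<Sum>t\<le>N. lam t z * h z ^ t) = 0"
    using alg unfolding alg_over_def by blast
  define S where "S = {t. t \<le> N \<and> (\<exists>z\<in>Y'. lam t z \<noteq> 0)}"
  have fS: "finite S" and neS: "S \<noteq> {}" using L(2) by (auto simp: S_def)
  define k where "k = Min S"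
  have kS: "k \<in> S" using fS neS by (simp add: k_def)
  then have kN: "k \<le> N" by (simp add: S_def)
  have below: "\<forall>z\<in>Y'. lam t z = 0" if "t < k" for t
  proof (rule ccontr)
    assume "\<not> (\<forall>z\<in>Y'. lam t z = 0)"
    then have "t \<in> S" using that kN by (auto simp: S_def)
    then show False using that Min_le[OF fS, of t] by (simp add: k_def)
  qed
  define R where "R = (\<lambda>z. \<Sum>t\<in>{k..N}. lam t z * h z ^ (t - k))"
  have "R \<in> polys UNIV" unfolding R_def
    using L(1) h(1) by (intro polys_sum polys.pmul polys_power) (auto intro: polys_on_polys)
  moreover have "\<forall>z\<in>Y'. h z ^ k * R z = 0"
  proof
    fix z assume z: "z \<in> Y'"
    have "{..N} = {..<k} \<union> {k..N}" using kN by auto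
    then have "(\<Sum>t\<le>N. lam t z * h z ^ t)
        = (\<Sum>t<k. lam t z * h z ^ t) + (\<Sum>t\<in>{k..N}. lam t z * h z ^ t)"
      by (simp only:) (rule sum.union_disjoint, auto)
    also have "(\<Sum>t<k. lam t z * h z ^ t) = 0" using below z by simp
    also have "(\<Sum>t\<in>{k..N}. lam t z * h z ^ t) = h z ^ k * R z"
      unfolding R_def sum_distrib_left
      by (rule sum.cong) (auto simp: power_add[symmetric] mult_ac)
    finally show "h z ^ k * R z = 0" using L(3) z by simp
  qed
  ultimately have "(\<forall>z\<in>Y'. h z ^ k = 0) \<or> (\<forall>z\<in>Y'. R z = 0)"
    using irred_alg_product_vanishes[OF irr polys_power[OF h(1)]] by blast
  then have R0: "\<forall>z\<in>Y'. R z = 0" using z0 by auto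
  have "R z = lam k z" if "z \<in> Y" for z
  proof -
    have "R z = lam k z * h z ^ (k - k) + (\<Sum>t\<in>{Suc k..N}. lam t z * h z ^ (t - k))"
      unfolding R_def using kN by (simp add: sum.atLeast_Suc_atMost)
    also have "(\<Sum>t\<in>{Suc k..N}. lam t z * h z ^ (t - k)) = 0"
      using h(2) that by (intro sum.neutral) auto
    finally show ?thesis by simp
  qed
  then have "\<forall>z\<in>Y. lam k z = 0" using R0 sub by (metis subsetD)
  then have "\<forall>z. lam k z = 0" using ind L(1) kN unfolding alg_indep_on_def by blast
  then show False using kS by (auto simp: S_def)
qed

lemma alg_indep_on_insert_exists:
  assumes irrY: "irred_alg UNIV Y" and irrY': "irred_alg UNIV Y'" and sub: "Y \<subset> Y'"
    and Y'V: "Y' \<subseteq> coord_subspace V" and ind: "alg_indep_on Y U"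
  shows "\<exists>w\<in>V - U. alg_indep_on Y' (insert w U)"
proof (rule ccontr)
  assume dep: "\<not> (\<exists>w\<in>V - U. alg_indep_on Y' (insert w U))"
  have "alg_over Y' U (\<lambda>z. z y)" for y
    using irrY' Y'V alg_indep_on_mono[OF ind] sub dep
    by (intro alg_over_coord) (auto simp: irred_alg_def)
  moreover obtain z0 where z0: "z0 \<in> Y'" "z0 \<notin> Y" using sub by blast
  moreover have "alg_set UNIV Y" using irrY by (simp add: irred_alg_def)
  then obtain h where h: "h \<in> polys UNIV" "\<forall>z\<in>Y. h z = 0" "h z0 \<noteq> 0"
    using z0(2) by (rule alg_set_separating_poly)
  ultimately have "alg_over Y' U h" using alg_over_polys[OF irrY'] by blast
  then have "h z0 = 0" using alg_over_vanishing_on_subset[OF irrY'] sub ind h z0(1) by blast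
  then show False using h(3) by simp
qed

definition alg_rank :: "'x set \<Rightarrow> ('x \<Rightarrow> 'a::field_char_0) set \<Rightarrow> nat" where
  "alg_rank V Y = Max (card ` {U. U \<subseteq> V \<and> alg_indep_on Y U})"

lemma alg_indep_on_empty:
  assumes "Y \<noteq> {}" shows "alg_indep_on Y {}"
  unfolding alg_indep_on_def
proof (intro ballI impI allI)
  fix f z assume f: "f \<in> polys_on {}" and van: "\<forall>z\<in>Y. f z = 0"
  obtain z0 where z0: "z0 \<in> Y" using assms by blast
  have "f z = f z0" using f unfolding polys_on_def depends_only_on_def by blast
  then show "f z = 0" using van z0 by simp
qed

lemma
  assumes "finite V" "Y \<noteq> {}"
  shows alg_rank_attained: "\<exists>U. U \<subseteq> V \<and> alg_indep_on Y U \<and> card U = alg_rank V Y"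
    and card_le_alg_rank: "U \<subseteq> V \<Longrightarrow> alg_indep_on Y U \<Longrightarrow> card U \<le> alg_rank V Y"
    and alg_rank_le_card: "alg_rank V Y \<le> card V"
proof -
  have fin: "finite (card ` {U. U \<subseteq> V \<and> alg_indep_on Y U})" using assms(1) by simp
  have ne: "card ` {U. U \<subseteq> V \<and> alg_indep_on Y U} \<noteq> {}" using alg_indep_on_empty[OF assms(2)] by blast
  show "\<exists>U. U \<subseteq> V \<and> alg_indep_on Y U \<and> card U = alg_rank V Y"
    using Max_in[OF fin ne] unfolding alg_rank_def by auto
  show "U \<subseteq> V \<Longrightarrow> alg_indep_on Y U \<Longrightarrow> card U \<le> alg_rank V Y"
    unfolding alg_rank_def using fin by (intro Max_ge) auto
  show "alg_rank V Y \<le> card V"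
    using Max_in[OF fin ne] assms(1) card_mono unfolding alg_rank_def by auto
qed

lemma alg_rank_strict_mono:
  assumes fV: "finite V" and irrY: "irred_alg UNIV Y" and irrY': "irred_alg UNIV Y'"
    and sub: "Y \<subset> Y'" and Y'V: "Y' \<subseteq> coord_subspace V"
  shows "alg_rank V Y < alg_rank V Y'"
proof -
  have ne: "Y \<noteq> {}" "Y' \<noteq> {}" using irrY irrY' by (simp_all add: irred_alg_def)
  obtain U where U: "U \<subseteq> V" "alg_indep_on Y U" "card U = alg_rank V Y"
    using alg_rank_attained[OF fV ne(1)] by blast
  obtain w where w: "w \<in> V - U" "alg_indep_on Y' (insert w U)"
    using alg_indep_on_insert_exists[OF irrY irrY' sub Y'V U(2)] by blast
  have "card (insert w U) = Suc (card U)" using w U(1) fV finite_subset by fastforce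
  moreover have "card (insert w U) \<le> alg_rank V Y'"
    using card_le_alg_rank[OF fV ne(2) _ w(2)] w(1) U(1) by blast
  ultimately show ?thesis using U(3) by simp
qed

lemma chain_length_le_alg_rank:
  assumes fV: "finite V" and irr: "\<forall>i\<le>n. irred_alg UNIV (Z i)" and ch: "\<forall>i<n. Z i \<subset> Z (Suc i)"
    and ZV: "Z n \<subseteq> coord_subspace V"
  shows "n \<le> alg_rank V (Z n)"
proof -
  have mono: "Z i \<subseteq> Z n" if "i \<le> n" for i
    using that by (induction i rule: inc_induct) (use ch in auto)
  have "i \<le> alg_rank V (Z i)" if "i \<le> n" for i
    using that
  proof (induction i)
    case (Suc i)
    have "alg_rank V (Z i) < alg_rank V (Z (Suc i))"
      using Suc.prems irr ch mono[OF Suc.prems] ZV by (intro alg_rank_strict_mono[OF fV]) auto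
    then show ?case using Suc by simp
  qed simp
  then show ?thesis by simp
qed

lemma coord_subspace_subset_if_alg_indep:
  fixes Z :: "('x \<Rightarrow> 'a::field_char_0) set"
  assumes algZ: "alg_set UNIV Z" and YZ: "Y \<subseteq> Z" and YV: "Y \<subseteq> coord_subspace V"
    and ind: "alg_indep_on Y V"
  shows "coord_subspace V \<subseteq> Z"
proof
  fix z :: "'x \<Rightarrow> 'a" assume z: "z \<in> coord_subspace V"
  obtain P where P: "P \<subseteq> polys UNIV" "Z = zero_set P" using algZ by (rule alg_setE)
  have restrict: "zero_outside V w = w" if "w \<in> coord_subspace V" for w :: "'x \<Rightarrow> 'a"
    using that by (auto simp: zero_outside_def coord_subspace_def)
  have "f z = 0" if f: "f \<in> P" for f
  proof -
    have vanY: "\<forall>w\<in>Y. f (zero_outside V w) = 0"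
    proof
      fix w assume "w \<in> Y"
      then have "w \<in> coord_subspace V" "w \<in> Z" using YV YZ by blast+
      then show "f (zero_outside V w) = 0" using restrict P(2) f by (simp add: zero_set_def)
    qed
    have "(\<lambda>z. f (zero_outside V z)) \<in> polys_on V"
      using polys_on_zero_outside P(1) f by blast
    from bspec[OF ind[unfolded alg_indep_on_def] this]
    have "f (zero_outside V z) = 0" using vanY by simp
    then show ?thesis using restrict[OF z] by simp
  qed
  then show "z \<in> Z" using P(2) by (simp add: zero_set_def)
qed

lemma alg_dim_eq_card_imp_eq_coord_subspace:
  fixes Z :: "('x \<Rightarrow> 'a::field_char_0) set"
  assumes fV: "finite V" and algZ: "alg_set UNIV Z" and ZV: "Z \<subseteq> coord_subspace V"
    and dim: "alg_dim UNIV Z = card V" and pos: "0 < card V"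
  shows "Z = coord_subspace V"
proof -
  define S where "S = {n. \<exists>C::nat \<Rightarrow> ('x \<Rightarrow> 'a) set.
      (\<forall>i\<le>n. irred_alg UNIV (C i)) \<and> (\<forall>i<n. C i \<subset> C (Suc i)) \<and> C n \<subseteq> Z}"
  have "S \<subseteq> {..card V}"
  proof
    fix n assume "n \<in> S"
    then obtain C where C: "\<forall>i\<le>n. irred_alg UNIV (C i)" "\<forall>i<n. C i \<subset> C (Suc i)" "C n \<subseteq> Z"
      unfolding S_def by blast
    have "n \<le> alg_rank V (C n)" using chain_length_le_alg_rank[OF fV C(1,2)] C(3) ZV by blast
    also have "\<dots> \<le> card V"
      by (rule alg_rank_le_card[OF fV]) (use C(1) in \<open>auto simp: irred_alg_def\<close>)
    finally show "n \<in> {..card V}" by simp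
  qed
  then have fS: "finite S" using finite_subset by blast
  have "Sup S = card V" using dim unfolding alg_dim_def S_def by simp
  with pos have "S \<noteq> {}" by (auto simp: Sup_nat_def)
  then have "card V \<in> S" using Max_in[OF fS] \<open>Sup S = card V\<close> by (simp add: Sup_nat_def)
  then obtain C where C: "\<forall>i\<le>card V. irred_alg UNIV (C i)" "\<forall>i<card V. C i \<subset> C (Suc i)"
      "C (card V) \<subseteq> Z"
    unfolding S_def by blast
  let ?Y = "C (card V)"
  have YV: "?Y \<subseteq> coord_subspace V" using C(3) ZV by blast
  have "?Y \<noteq> {}" using C(1) by (simp add: irred_alg_def)
  then obtain U where U: "U \<subseteq> V" "alg_indep_on ?Y U" "card U = alg_rank V ?Y"
    using alg_rank_attained[OF fV] by blast
  have "card V \<le> card U" using chain_length_le_alg_rank[OF fV C(1,2) YV] U(3) by simp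
  then have "U = V" using U(1) fV by (simp add: card_seteq)
  then have "coord_subspace V \<subseteq> Z"
    using coord_subspace_subset_if_alg_indep[OF algZ C(3) YV] U(2) by blast
  then show ?thesis using ZV by blast
qed

section \<open>Complex polynomials vanishing on real points\<close>

lemma polys_of_real_fun_Re_Im:
  fixes f :: "('x \<Rightarrow> complex) \<Rightarrow> complex"
  assumes "f \<in> polys UNIV"
  shows "\<exists>hr hi. hr \<in> polys UNIV \<and> hi \<in> polys UNIV \<and> (\<forall>z. f (of_real_fun z) = Complex (hr z) (hi z))"
  using assms
proof induction
  case (pconst c)
  show ?case
    by (intro exI[of _ "\<lambda>_. Re c"] exI[of _ "\<lambda>_. Im c"]) (auto intro: polys_const_UNIV simp: complex_eq_iff)
next
  case (pvar x)
  show ?case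
    by (intro exI[of _ "\<lambda>z. z x"] exI[of _ "\<lambda>_. 0"])
      (auto intro: polys_const_UNIV polys.pvar simp: complex_eq_iff of_real_fun_def)
next
  case (padd f g)
  obtain a b where 1: "a \<in> polys UNIV" "b \<in> polys UNIV" "\<forall>z. f (of_real_fun z) = Complex (a z) (b z)"
    using padd.IH(1) by blast
  obtain c d where 2: "c \<in> polys UNIV" "d \<in> polys UNIV" "\<forall>z. g (of_real_fun z) = Complex (c z) (d z)"
    using padd.IH(2) by blast
  show ?case
    by (intro exI[of _ "\<lambda>z. a z + c z"] exI[of _ "\<lambda>z. b z + d z"])
      (use 1 2 in \<open>auto intro: polys.padd simp: complex_eq_iff\<close>)
next
  case (pmul f g)
  obtain a b where 1: "a \<in> polys UNIV" "b \<in> polys UNIV" "\<forall>z. f (of_real_fun z) = Complex (a z) (b z)"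
    using pmul.IH(1) by blast
  obtain c d where 2: "c \<in> polys UNIV" "d \<in> polys UNIV" "\<forall>z. g (of_real_fun z) = Complex (c z) (d z)"
    using pmul.IH(2) by blast
  show ?case
    by (intro exI[of _ "\<lambda>z. a z * c z - b z * d z"] exI[of _ "\<lambda>z. a z * d z + b z * c z"])
      (use 1 2 in \<open>auto intro: polys.padd polys.pmul polys_diff simp: complex_eq_iff\<close>)
qed

text \<open>Induction on the number of coordinates allowed to be non-real: a univariate polynomial
  vanishing on all of the reals is zero.\<close>
lemma polys_vanish_on_complex_coord_subspace:
  fixes f :: "('x \<Rightarrow> complex) \<Rightarrow> complex"
  assumes f: "f \<in> polys UNIV" and fV: "finite V"
    and van: "\<forall>z\<in>coord_subspace V. f (of_real_fun z) = 0"
  shows "\<forall>z\<in>coord_subspace V. f z = 0"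
proof -
  have "\<forall>z\<in>coord_subspace V. (\<forall>y. y \<notin> S \<longrightarrow> z y \<in> \<real>) \<longrightarrow> f z = 0"
    if "finite S" "S \<subseteq> V" for S
    using that
  proof (induction S rule: finite_induct)
    case empty
    show ?case
    proof (intro ballI impI)
      fix z :: "'x \<Rightarrow> complex" assume z: "z \<in> coord_subspace V" "\<forall>y. y \<notin> {} \<longrightarrow> z y \<in> \<real>"
      have "(\<lambda>y. Re (z y)) \<in> coord_subspace V" using z(1) by (auto simp: coord_subspace_def)
      then have "f (of_real_fun (\<lambda>y. Re (z y))) = 0" using van by blast
      moreover have "of_real_fun (\<lambda>y. Re (z y)) = z" using z(2) by (auto simp: of_real_fun_def fun_eq_iff)
      ultimately show "f z = 0" by simp
    qed
  next
    case (insert y S)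
    show ?case
    proof (intro ballI impI)
      fix z :: "'x \<Rightarrow> complex" assume z: "z \<in> coord_subspace V" "\<forall>y'. y' \<notin> insert y S \<longrightarrow> z y' \<in> \<real>"
      obtain pz where P: "\<forall>z. f z = poly (pz z) (z y)" "\<forall>z t. pz (z(y := t)) = pz z"
        using polys_poly_in_var[OF f, of y] by blast
      have "poly (pz z) t = 0" if "t \<in> range complex_of_real" for t
      proof -
        have "z(y := t) \<in> coord_subspace V" using z(1) insert.prems by (auto simp: coord_subspace_def)
        moreover have "\<forall>y'. y' \<notin> S \<longrightarrow> (z(y := t)) y' \<in> \<real>" using z(2) that by (auto simp: Reals_def)
        ultimately have "f (z(y := t)) = 0" using insert.IH[rule_format] insert.prems by simp
        moreover have "f (z(y := t)) = poly (pz z) t"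
          using P(1)[rule_format, of "z(y := t)"] P(2) by simp
        ultimately show ?thesis by simp
      qed
      moreover have "infinite (range complex_of_real)"
      proof
        assume "finite (range complex_of_real)"
        then have "finite (UNIV :: real set)" by (rule finite_imageD) (simp add: inj_on_def)
        then show False by (simp add: infinite_UNIV_char_0)
      qed
      ultimately have "pz z = 0" using poly_eq_0_if_infinite_roots by blast
      then show "f z = 0" using P(1) by simp
    qed
  qed
  from this[OF fV order_refl] show ?thesis by (auto simp: coord_subspace_def)
qed

lemma polys_vanish_on_complex_coord_subspace_if_dense:
  fixes R :: "('x \<Rightarrow> real) set" and f :: "('x \<Rightarrow> complex) \<Rightarrow> complex"
  assumes fV: "finite V" and dense: "zar_closure UNIV R = coord_subspace V" and f: "f \<in> polys UNIV"
    and van: "\<forall>z\<in>R. f (of_real_fun z) = 0"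
  shows "\<forall>z\<in>coord_subspace V. f z = 0"
proof (rule polys_vanish_on_complex_coord_subspace[OF f fV])
  obtain hr hi where H: "hr \<in> polys UNIV" "hi \<in> polys UNIV" "\<forall>z. f (of_real_fun z) = Complex (hr z) (hi z)"
    using polys_of_real_fun_Re_Im[OF f] by blast
  have "\<forall>z\<in>R. hr z = 0" "\<forall>z\<in>R. hi z = 0" using van H(3) by (auto simp: complex_eq_iff)
  then have "hr z = 0" "hi z = 0" if "z \<in> coord_subspace V" for z
    using zar_closure_vanishes[OF H(1)] zar_closure_vanishes[OF H(2)] that dense by blast+
  then show "\<forall>z\<in>coord_subspace V. f (of_real_fun z) = 0"
    using H(3) by (simp add: complex_eq_iff)
qed

section \<open>Genericity\<close>

definition generic_over :: "'a::field_char_0 set \<Rightarrow> nat \<Rightarrow> ('v \<Rightarrow> nat \<Rightarrow> 'a) \<Rightarrow> bool" where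
  "generic_over K d p \<longleftrightarrow> p \<in> frameworks d \<and>
     (\<forall>f\<in>polys K. f (fc p) = 0 \<longrightarrow> (\<forall>q\<in>frameworks d. f (fc q) = 0))"

lemma generic_fw_if_generic_over:
  assumes "generic_over {x. algebraic x} d p" shows "generic_fw d p"
  using assms polys_mono[of _ \<rat> "{x. algebraic x}"] rat_imp_algebraic
  unfolding generic_over_def generic_fw_def by blast

lemma generic_over_cmult:
  fixes p :: "'v \<Rightarrow> nat \<Rightarrow> 'a::field_char_0"
  assumes p: "generic_over K d p" and c: "c \<in> K" "c \<noteq> 0"
  shows "generic_over K d (\<lambda>x i. c * p x i)"
  unfolding generic_over_def
proof (intro conjI ballI impI)
  show "(\<lambda>x i. c * p x i) \<in> frameworks d" using p by (simp add: generic_over_def frameworks_def)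
  fix f and q :: "'v \<Rightarrow> nat \<Rightarrow> 'a"
  assume f: "f \<in> polys K" "f (fc (\<lambda>x i. c * p x i)) = 0" and q: "q \<in> frameworks d"
  have "(\<lambda>z. f (\<lambda>y. c * z y)) \<in> polys K"
    using c by (intro polys_subst[OF f(1)] polys.pmul polys.pconst polys.pvar)
  moreover have "(\<lambda>x i. inverse c * q x i) \<in> frameworks d" using q by (simp add: frameworks_def)
  moreover have "(\<lambda>z. f (\<lambda>y. c * z y)) (fc p) = 0" using f(2) by (simp add: fc_def case_prod_unfold)
  ultimately have "(\<lambda>z. f (\<lambda>y. c * z y)) (fc (\<lambda>x i. inverse c * q x i)) = 0"
    using p[unfolded generic_over_def, THEN conjunct2, rule_format,
        of "\<lambda>z. f (\<lambda>y. c * z y)" "\<lambda>x i. inverse c * q x i"] by simp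
  moreover have "(\<lambda>y. c * fc (\<lambda>x i. inverse c * q x i) y) = fc q"
    using c by (auto simp: fc_def fun_eq_iff)
  ultimately show "f (fc q) = 0" by simp
qed

lemma complexification_eq: "complexification S = zar_closure UNIV (of_real_fun ` S)"
  by (simp add: complexification_def of_real_fun_def[abs_def])

lemma complexification_boost_invariant:
  fixes E :: "(('v \<Rightarrow> nat \<Rightarrow> real) \<times> ('v \<Rightarrow> nat \<Rightarrow> real)) set"
  assumes comp: "irred_component UNIV (pc ` E) (pc ` Eplus G d)" and s: "s \<le> d"
    and "c \<noteq> 0" "w \<in> complexification (pc ` E)"
  shows "boost s c w \<in> complexification (pc ` E)"
proof -
  have algT: "alg_set UNIV (pc ` Eplus G d)" by (simp add: pc_Eplus alg_set_Eplus_pc)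
  have "boost s c' z \<in> pc ` E" if "c' > 0" "z \<in> pc ` E" for c' z
  proof (rule irred_component_boost_invariant[OF comp algT _ that])
    fix c'' :: real and z' assume "c'' > 0" "z' \<in> pc ` Eplus G d"
    then show "boost s c'' z' \<in> pc ` Eplus G d"
      unfolding pc_Eplus by (intro boost_Eplus_pc[OF _ s]) auto
  qed
  then show ?thesis
    using assms(4) unfolding complexification_eq by (rule zar_closure_of_real_boost_invariant[OF _ assms(3)])
qed

lemma frameworks_of_complexification:
  assumes "E \<subseteq> Eplus G d" "pc e \<in> complexification (pc ` E)"
  shows "fst e \<in> frameworks d" "snd e \<in> frameworks d"
proof -
  have "pc e (b, x, i) = 0" if "d \<le> i" for b x i
  proof (rule zar_closure_vanishes[OF polys.pvar _ assms(2)[unfolded complexification_eq]])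
    show "\<forall>w\<in>of_real_fun ` pc ` E. w (b, x, i) = 0"
      using assms(1) that by (auto simp: of_real_fun_def pc_def Eplus_def frameworks_def)
  qed
  from this[where b = True] this[where b = False] show "fst e \<in> frameworks d" "snd e \<in> frameworks d"
    by (auto simp: frameworks_def pc_def)
qed

lemma zar_closure_fst_eq_coord_subspace:
  fixes E :: "(('v::finite \<Rightarrow> nat \<Rightarrow> real) \<times> ('v \<Rightarrow> nat \<Rightarrow> real)) set"
  assumes "fst ` E \<subseteq> frameworks d" "set_dim UNIV (fc ` fst ` E) = card (UNIV :: 'v set) * d"
    and "0 < d"
  shows "zar_closure UNIV (fc ` fst ` E) = coord_subspace (UNIV \<times> {..<d})"
proof (rule alg_dim_eq_card_imp_eq_coord_subspace)
  have "fc ` fst ` E \<subseteq> coord_subspace (UNIV \<times> {..<d})"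
    using assms(1) by (auto simp: fc_def frameworks_def coord_subspace_def)
  then show "zar_closure UNIV (fc ` fst ` E) \<subseteq> coord_subspace (UNIV \<times> {..<d})"
    by (rule zar_closure_minimal[OF alg_set_coord_subspace])
  show "alg_dim UNIV (zar_closure UNIV (fc ` fst ` E)) = card (UNIV \<times> {..<d} :: ('v \<times> nat) set)"
    using assms(2) by (simp add: set_dim_def card_cartesian_product)
  show "0 < card (UNIV \<times> {..<d} :: ('v \<times> nat) set)"
    using assms(3) by (simp add: card_cartesian_product finite_UNIV_card_ge_0)
qed (simp_all add: alg_set_zar_closure)

lemma generic_over_fst_of_generic_in:
  fixes E :: "(('v::finite \<Rightarrow> nat \<Rightarrow> real) \<times> ('v \<Rightarrow> nat \<Rightarrow> real)) set"
  assumes dense: "zar_closure UNIV (fc ` fst ` E) = coord_subspace (UNIV \<times> {..<d})"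
    and fw: "fst e \<in> frameworks d"
    and e: "generic_in {e. pc e \<in> complexification (pc ` E)} e"
  shows "generic_over {x. algebraic x} d (fst e)"
  unfolding generic_over_def
proof (intro conjI ballI impI fw)
  fix f and q :: "'v \<Rightarrow> nat \<Rightarrow> complex"
  assume f: "f \<in> polys {x. algebraic x}" "f (fc (fst e)) = 0" and q: "q \<in> frameworks d"
  have fst_coords: "(\<lambda>(x, i). pc e' (True, x, i)) = fc (fst e')" for e' :: "('v \<Rightarrow> nat \<Rightarrow> complex) \<times> _"
    by (simp add: pc_def fc_def)
  define g where "g w = f (\<lambda>(x, i). w (True, x, i))" for w :: "bool \<times> 'v \<times> nat \<Rightarrow> complex"
  have "(\<lambda>w. (\<lambda>(x, i). w (True, x, i)) y) \<in> polys {x. algebraic x}" for y :: "'v \<times> nat"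
    by (cases y) (simp add: polys.pvar)
  then have "g \<in> polys {x. algebraic x}" unfolding g_def by (rule polys_subst[OF f(1)])
  moreover have "g (pc e) = 0" using f(2) by (simp add: g_def fst_coords)
  ultimately have van: "g (pc e') = 0" if "pc e' \<in> complexification (pc ` E)" for e'
    using e[unfolded generic_in_def, THEN conjunct2, rule_format, of g] that by simp
  have "f (of_real_fun z) = 0" if z: "z \<in> fc ` fst ` E" for z
  proof -
    obtain p p' where pp': "(p, p') \<in> E" "z = fc p" using z by (auto simp: image_iff)
    then have "of_real_fun (pc (p, p')) \<in> zar_closure UNIV (of_real_fun ` pc ` E)"
      by (intro subset_zar_closure[THEN subsetD] imageI)
    then have "g (of_real_fun (pc (p, p'))) = 0"
      using van[of "unpc (of_real_fun (pc (p, p')))"] by (simp add: complexification_eq)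
    moreover have "(\<lambda>(x, i). of_real_fun (pc (p, p')) (True, x, i)) = of_real_fun (fc p)"
      by (auto simp: of_real_fun_def pc_def fc_def)
    ultimately show ?thesis using pp'(2) by (simp add: g_def)
  qed
  moreover have "f \<in> polys UNIV" using polys_mono[OF f(1)] by blast
  ultimately have "\<forall>z\<in>coord_subspace (UNIV \<times> {..<d}). f z = 0"
    by (intro polys_vanish_on_complex_coord_subspace_if_dense[OF _ dense]) auto
  moreover have "fc q \<in> coord_subspace (UNIV \<times> {..<d})"
    using q by (auto simp: fc_def frameworks_def coord_subspace_def)
  ultimately show "f (fc q) = 0" by blast
qed

lemma snd_eq_fst_pogorelov:
  assumes "fst e \<in> frameworks d" "snd e \<in> frameworks d"
  shows "snd e = (\<lambda>x i. - \<i> * fst (pogorelov d e) x i)"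
  using assms by (auto simp: fst_pogorelov frameworks_def fun_eq_iff)

lemma generic_over_snd_of_generic_in:
  assumes bij: "bij_betw (pogorelov d) V V"
    and fst: "\<And>e. generic_in V e \<Longrightarrow> generic_over {x. algebraic x} d (fst e)"
    and fw: "fst e \<in> frameworks d" "snd e \<in> frameworks d" and e: "generic_in V e"
  shows "generic_over {x. algebraic x} d (snd e)"
proof -
  have "snd e = (\<lambda>x i. - \<i> * fst (pogorelov d e) x i)"
    using snd_eq_fst_pogorelov[OF fw] .
  moreover have "generic_over {x. algebraic x} d (fst (pogorelov d e))"
    using fst generic_in_pogorelov[OF bij e] by blast
  ultimately show ?thesis
    using generic_over_cmult[of "{x. algebraic x}" d "fst (pogorelov d e)" "- \<i>"]
    by (simp add: algebraic_minus)
qed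

theorem mainTheorem9:
  fixes G :: "'v::finite \<Rightarrow> 'v \<Rightarrow> bool"
    and d s :: nat
    and E :: "(('v \<Rightarrow> nat \<Rightarrow> real) \<times> ('v \<Rightarrow> nat \<Rightarrow> real)) set"
    and EC :: "(('v \<Rightarrow> nat \<Rightarrow> complex) \<times> ('v \<Rightarrow> nat \<Rightarrow> complex)) set"
  assumes sym: "\<And>a b. G a b \<Longrightarrow> G b a"
    and irrefl: "\<And>a. \<not> G a a"
    and s_le: "s \<le> d"
    and loc: "gen_loc_rigid G d"
    and not_glob: "\<not> gen_glob_rigid G d"
    and comp: "irred_component (UNIV::real set) (pc ` E) (pc ` Eplus G d)"
    and dim: "set_dim (UNIV::real set) (fc ` fst ` E) = card (UNIV :: 'v set) * d"
    and noncong: "\<exists>(p, q)\<in>E. \<not> congruent d p q"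
    and EC_def: "EC = {e. pc e \<in> complexification (pc ` E)}"
  shows "bij_betw (pogorelov s) EC EC \<and>
         (\<forall>e. generic_in EC e \<longrightarrow>
              generic_in EC (pogorelov s e) \<and>
              generic_fw d (fst (pogorelov s e)) \<and>
              generic_fw d (snd (pogorelov s e)))"
proof -
  have "0 < d" using noncong by (cases d) (auto simp: congruent_def sqd_def)
  have EEp: "E \<subseteq> Eplus G d"
    using comp unfolding irred_component_def inj_image_subset_iff[OF inj_pc] by blast
  have bij: "bij_betw (pogorelov s') EC EC" if "s' \<le> d" for s'
    unfolding EC_def by (rule bij_betw_pogorelov) (rule complexification_boost_invariant[OF comp that])
  have fw: "fst e \<in> frameworks d" "snd e \<in> frameworks d" if "generic_in EC e" for e
    using frameworks_of_complexification[OF EEp] that EC_def by (auto simp: generic_in_def)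
  have dense: "zar_closure UNIV (fc ` fst ` E) = coord_subspace (UNIV \<times> {..<d})"
    by (rule zar_closure_fst_eq_coord_subspace[OF _ dim \<open>0 < d\<close>]) (use EEp in \<open>auto simp: Eplus_def\<close>)
  have generic_fst: "generic_over {x. algebraic x} d (fst e)" if e: "generic_in EC e" for e
    using generic_over_fst_of_generic_in[OF dense fw(1)[OF e]] e EC_def by simp
  have generic_snd: "generic_over {x. algebraic x} d (snd e)" if e: "generic_in EC e" for e
    using generic_over_snd_of_generic_in[OF bij[OF order_refl] generic_fst fw[OF e] e] .
  show ?thesis
  proof (intro conjI allI impI bij[OF s_le])
    fix e assume "generic_in EC e"
    then show e': "generic_in EC (pogorelov s e)" by (rule generic_in_pogorelov[OF bij[OF s_le]])
    show "generic_fw d (fst (pogorelov s e))" using generic_fst[OF e'] by (rule generic_fw_if_generic_over)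
    show "generic_fw d (snd (pogorelov s e))" using generic_snd[OF e'] by (rule generic_fw_if_generic_over)
  qed
qed

end
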